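(* Let $r\in L_-$ be a primitive vector with $r^2=-2n$, $n\geq1$, such that $\Lambda_r=\langle r,\sigma^*(r)\rangle$ is primitive in $L_-$, and let $M_r=P/(L_+\oplus\Lambda_r)$ as below. Then: (a) if $n$ is even, then $M_r\cong\mathbb Z/2$ and $(r,L_-)=\mathbb Z$; (b) if $n$ is odd, then $M_r\cong\mathbb Z/2\oplus\mathbb Z/2$ if $(r,L_-)=2\mathbb Z$, and $M_r\cong\mathbb Z/2$ if $(r,L_-)=\mathbb Z$.
   Context: Fix the lattice $L_{K3}=U^{\oplus3}\oplus E_8^{\oplus2}$ (even unimodular, identified with $H^2(X_C,\mathbb Z)$ for $X_C=\{t^4=f(x,y,z)\}\subset\mathbb P^3$, $C=\{f=0\}$ a smooth plane quartic) together with the isometry $\sigma^*$ induced by $\sigma(x:y:z:t)=(x:y:z:it)$; $\tau^*=(\sigma^* )^2$. $L_\pm=\{x\in L_{K3}:\tau^*x=\pm x\}$; $\sigma^*$ preserves $L_\pm$. For $r\in L_-$, $(r,L_-)$ denotes the ideal $\{(r,y):y\in L_-\}\subset\mathbb Z$. $\Lambda_r^\perp$ is the orthogonal complement of $\Lambda_r$ in $L_-$, and $P$ is the orthogonal complement of $\Lambda_r^\perp$ in $L_{K3}$; then $L_+\oplus\Lambda_r\subset P$ with finite quotient $M_r$. *)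

theory Defs
  imports "HOL-Algebra.Elementary_Groups" "HOL-Library.Function_Algebras"
begin

text \<open>Coordinates 0..5: three hyperbolic planes U; 6..13 and 14..21: two copies of
  the (negative definite) E8 lattice, in the basis of simple roots.\<close>

definition e8_edge :: "nat \<Rightarrow> nat \<Rightarrow> bool" where
  "e8_edge a b \<longleftrightarrow> (a < 7 \<and> b < 7 \<and> (a = b + 1 \<or> b = a + 1)) \<or> (a = 4 \<and> b = 7) \<or> (a = 7 \<and> b = 4)"

definition e8_gram :: "nat \<Rightarrow> nat \<Rightarrow> int" where
  "e8_gram a b = (if a = b then -2 else if e8_edge a b then 1 else 0)"

definition k3_gram :: "nat \<Rightarrow> nat \<Rightarrow> int" where
  "k3_gram i j =
     (if i < 6 \<and> j < 6 then (if i div 2 = j div 2 \<and> i \<noteq> j then 1 else 0)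
      else if 6 \<le> i \<and> i < 14 \<and> 6 \<le> j \<and> j < 14 then e8_gram (i - 6) (j - 6)
      else if 14 \<le> i \<and> i < 22 \<and> 14 \<le> j \<and> j < 22 then e8_gram (i - 14) (j - 14)
      else 0)"

definition LK3 :: "(nat \<Rightarrow> int) set" where
  "LK3 = {x. \<forall>i\<ge>22. x i = 0}"

definition bil :: "(nat \<Rightarrow> int) \<Rightarrow> (nat \<Rightarrow> int) \<Rightarrow> int" where
  "bil x y = (\<Sum>i<22. \<Sum>j<22. x i * k3_gram i j * y j)"

definition smul :: "int \<Rightarrow> (nat \<Rightarrow> int) \<Rightarrow> (nat \<Rightarrow> int)" where
  "smul c x = (\<lambda>i. c * x i)"

definition mat_app :: "(nat \<Rightarrow> nat \<Rightarrow> int) \<Rightarrow> (nat \<Rightarrow> int) \<Rightarrow> (nat \<Rightarrow> int)" where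
  "mat_app S x = (\<lambda>i. if i < 22 then (\<Sum>j<22. S i j * x j) else 0)"

text \<open>Lattice-theoretic characterisation of the isometry sigma^* induced by
  (x:y:z:t) -> (x:y:z:it) on X_C: an isometry of order dividing 4,
  whose square tau has invariant lattice L_+ isometric to <2> + <-2>^7
  (pull-back of H^2 of the degree-2 del Pezzo surface X_C/tau), and whose own
  invariant lattice is spanned by a class h with h^2 = 4 (the hyperplane class).\<close>
definition quartic_K3_sigma :: "(nat \<Rightarrow> nat \<Rightarrow> int) \<Rightarrow> bool" where
  "quartic_K3_sigma S \<longleftrightarrow>
     (\<forall>x\<in>LK3. \<forall>y\<in>LK3. bil (mat_app S x) (mat_app S y) = bil x y) \<and>
     (\<forall>x\<in>LK3. mat_app S (mat_app S (mat_app S (mat_app S x))) = x) \<and>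
     (\<exists>e :: nat \<Rightarrow> nat \<Rightarrow> int.
        {x\<in>LK3. mat_app S (mat_app S x) = x} = {(\<lambda>i. \<Sum>k<8. c k * e k i) | c. True} \<and>
        (\<forall>k<8. \<forall>l<8. bil (e k) (e l) = (if k = l then (if k = 0 then 2 else -2) else 0))) \<and>
     (\<exists>h. {x\<in>LK3. mat_app S x = x} = {smul c h | c. True} \<and> bil h h = 4)"

definition Lplus :: "(nat \<Rightarrow> nat \<Rightarrow> int) \<Rightarrow> (nat \<Rightarrow> int) set" where
  "Lplus S = {x\<in>LK3. mat_app S (mat_app S x) = x}"

definition Lminus :: "(nat \<Rightarrow> nat \<Rightarrow> int) \<Rightarrow> (nat \<Rightarrow> int) set" where
  "Lminus S = {x\<in>LK3. mat_app S (mat_app S x) = - x}"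

definition primitive_vec :: "(nat \<Rightarrow> int) set \<Rightarrow> (nat \<Rightarrow> int) \<Rightarrow> bool" where
  "primitive_vec A r \<longleftrightarrow> r \<in> A \<and> r \<noteq> 0 \<and> (\<forall>k y. y \<in> A \<and> r = smul k y \<longrightarrow> \<bar>k\<bar> = 1)"

definition primitive_sub :: "(nat \<Rightarrow> int) set \<Rightarrow> (nat \<Rightarrow> int) set \<Rightarrow> bool" where
  "primitive_sub A B \<longleftrightarrow> B \<subseteq> A \<and> (\<forall>x\<in>A. \<forall>m::int. m \<noteq> 0 \<and> smul m x \<in> B \<longrightarrow> x \<in> B)"

definition Lam :: "(nat \<Rightarrow> nat \<Rightarrow> int) \<Rightarrow> (nat \<Rightarrow> int) \<Rightarrow> (nat \<Rightarrow> int) set" where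
  "Lam S r = {smul a r + smul b (mat_app S r) | a b. True}"

definition Lam_perp :: "(nat \<Rightarrow> nat \<Rightarrow> int) \<Rightarrow> (nat \<Rightarrow> int) \<Rightarrow> (nat \<Rightarrow> int) set" where
  "Lam_perp S r = {y\<in>Lminus S. \<forall>x\<in>Lam S r. bil x y = 0}"

definition Pr :: "(nat \<Rightarrow> nat \<Rightarrow> int) \<Rightarrow> (nat \<Rightarrow> int) \<Rightarrow> (nat \<Rightarrow> int) set" where
  "Pr S r = {x\<in>LK3. \<forall>y\<in>Lam_perp S r. bil x y = 0}"

definition lat_group :: "(nat \<Rightarrow> int) set \<Rightarrow> (nat \<Rightarrow> int) monoid" where
  "lat_group A = \<lparr>carrier = A, mult = (+), one = 0\<rparr>"

definition M_r :: "(nat \<Rightarrow> nat \<Rightarrow> int) \<Rightarrow> (nat \<Rightarrow> int) \<Rightarrow> (nat \<Rightarrow> int) set monoid" where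
  "M_r S r = lat_group (Pr S r) Mod {a + b | a b. a \<in> Lplus S \<and> b \<in> Lam S r}"

definition pair_ideal :: "(nat \<Rightarrow> nat \<Rightarrow> int) \<Rightarrow> (nat \<Rightarrow> int) \<Rightarrow> int set" where
  "pair_ideal S r = {bil r y | y. y \<in> Lminus S}"

end

theory Submission
  imports Defs "HOL-Library.Z2"
begin

(*
  Write Lam = Lam S r, K = Lam^perp in L_- and P = K^perp. As Lam is primitive in L_-, P consists
  of the x with x - tau x in Lam, and writing x - tau x = a r + b (sigma r) the map
  x |-> (a mod 2, b mod 2) identifies M_r with a subgroup of (Z/2)^2, the kernel being exactly
  L_+ + Lam. Its image is controlled by two facts, both proved from L_+ = <2> + <-2>^7 and the
  unimodularity of LK3: a vector v of L_- lies in (1 - tau) LK3 iff v . L_- is even, and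
  (r + sigma r) . L_- is always even; the latter follows by counting kernels and images of
  1 + sigma acting on LK3 / 2 LK3. So if (r, L_-) = 2Z the image is everything, while if
  (r, L_-) = Z then a and b have the same parity and the image is the diagonal. Finally
  (r, L_-) contains 2 because r is primitive in the unimodular LK3, and (r, L_-) = 2Z forces n
  odd: writing r = x - tau x, the square of x is computed modulo 2 from the fact that h is
  characteristic modulo 4 on L_+.
*)

lemma sum_fun_apply: "(sum f A) x = (\<Sum>a\<in>A. f a x)"
  by (induction A rule: infinite_finite_induct) auto

lemma bil_add_left: "bil (x + y) z = bil x z + bil y z"
  unfolding bil_def by (simp add: algebra_simps sum.distrib)

lemma bil_add_right: "bil z (x + y) = bil z x + bil z y"
  unfolding bil_def by (simp add: algebra_simps sum.distrib)

lemma bil_smul_left: "bil (smul c x) z = c * bil x z"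
  unfolding bil_def smul_def by (simp add: algebra_simps sum_distrib_left)

lemma bil_smul_right: "bil z (smul c x) = c * bil z x"
  unfolding bil_def smul_def by (simp add: algebra_simps sum_distrib_left)

lemma bil_minus_left: "bil (- x) z = - bil x z"
  unfolding bil_def by (simp add: sum_negf)

lemma bil_minus_right: "bil z (- x) = - bil z x"
  unfolding bil_def by (simp add: sum_negf)

lemma bil_diff_left: "bil (x - y) z = bil x z - bil y z"
  unfolding bil_def by (simp add: algebra_simps sum_subtractf)

lemma bil_diff_right: "bil z (x - y) = bil z x - bil z y"
  unfolding bil_def by (simp add: algebra_simps sum_subtractf)

lemma bil_zero_left [simp]: "bil 0 z = 0"
  unfolding bil_def by simp

lemma bil_zero_right [simp]: "bil z 0 = 0"
  unfolding bil_def by simp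

lemma bil_sum_left: "bil (\<Sum>k\<in>A. f k) z = (\<Sum>k\<in>A. bil (f k) z)"
  by (induction A rule: infinite_finite_induct) (simp_all only: sum.infinite sum.empty sum.insert not_False_eq_True bil_zero_left bil_add_left)

lemma bil_sum_right: "bil z (\<Sum>k\<in>A. f k) = (\<Sum>k\<in>A. bil z (f k))"
  by (induction A rule: infinite_finite_induct) (simp_all only: sum.infinite sum.empty sum.insert not_False_eq_True bil_zero_right bil_add_right)

lemma e8_gram_sym: "e8_gram a b = e8_gram b a"
  unfolding e8_gram_def e8_edge_def by auto

lemma k3_gram_sym: "k3_gram i j = k3_gram j i"
  unfolding k3_gram_def using e8_gram_sym by auto

lemma bil_sym: "bil x y = bil y x"
  unfolding bil_def
  by (subst sum.swap) (simp add: k3_gram_sym mult.commute mult.left_commute)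

lemma smul_apply [simp]: "smul c x i = c * x i"
  unfolding smul_def by simp

lemma smul_add: "smul c (x + y) = smul c x + smul c y"
  unfolding smul_def by (auto simp: algebra_simps)

lemma smul_smul: "smul c (smul d x) = smul (c * d) x"
  unfolding smul_def by (auto simp: algebra_simps)

lemma smul_one [simp]: "smul 1 x = x"
  unfolding smul_def by auto

lemma smul_zero [simp]: "smul 0 x = 0"
  unfolding smul_def by auto

lemma smul_two: "smul 2 x = x + x"
  unfolding smul_def by (auto simp: algebra_simps)

lemma smul_cancel: "c \<noteq> 0 \<Longrightarrow> smul c x = smul c y \<Longrightarrow> x = y"
  unfolding smul_def by (auto simp: fun_eq_iff)

lemma LK3_add [intro]: "x \<in> LK3 \<Longrightarrow> y \<in> LK3 \<Longrightarrow> x + y \<in> LK3"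
  unfolding LK3_def by auto

lemma LK3_diff [intro]: "x \<in> LK3 \<Longrightarrow> y \<in> LK3 \<Longrightarrow> x - y \<in> LK3"
  unfolding LK3_def by auto

lemma LK3_uminus [intro]: "x \<in> LK3 \<Longrightarrow> - x \<in> LK3"
  unfolding LK3_def by auto

lemma LK3_smul [intro]: "x \<in> LK3 \<Longrightarrow> smul c x \<in> LK3"
  unfolding LK3_def by auto

lemma LK3_zero [simp, intro]: "0 \<in> LK3"
  unfolding LK3_def by auto

lemma LK3_sum [intro]: "(\<And>k. k \<in> A \<Longrightarrow> f k \<in> LK3) \<Longrightarrow> (\<Sum>k\<in>A. f k) \<in> LK3"
  unfolding LK3_def by (auto simp: sum_fun_apply)

lemma mat_app_LK3 [simp, intro]: "mat_app S x \<in> LK3"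
  unfolding LK3_def mat_app_def by auto

lemma mat_app_add: "mat_app S (x + y) = mat_app S x + mat_app S y"
  unfolding mat_app_def by (auto simp: algebra_simps sum.distrib)

lemma mat_app_smul: "mat_app S (smul c x) = smul c (mat_app S x)"
  unfolding mat_app_def smul_def by (auto simp: algebra_simps sum_distrib_left)

lemma mat_app_uminus: "mat_app S (- x) = - mat_app S x"
  unfolding mat_app_def by (auto simp: sum_negf)

lemma mat_app_diff: "mat_app S (x - y) = mat_app S x - mat_app S y"
  unfolding mat_app_def by (auto simp: algebra_simps sum_subtractf)

lemma mat_app_zero [simp]: "mat_app S 0 = 0"
  unfolding mat_app_def by auto

section \<open>Unimodularity and evenness of LK3\<close>

definition k3_gram_inv_rows :: "int list list" where
  "k3_gram_inv_rows = [[0, 1, 0, 0, 0, 0, 0, 0, 0, 0, 0, 0, 0, 0, 0, 0, 0, 0, 0, 0, 0, 0],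
     [1, 0, 0, 0, 0, 0, 0, 0, 0, 0, 0, 0, 0, 0, 0, 0, 0, 0, 0, 0, 0, 0],
     [0, 0, 0, 1, 0, 0, 0, 0, 0, 0, 0, 0, 0, 0, 0, 0, 0, 0, 0, 0, 0, 0],
     [0, 0, 1, 0, 0, 0, 0, 0, 0, 0, 0, 0, 0, 0, 0, 0, 0, 0, 0, 0, 0, 0],
     [0, 0, 0, 0, 0, 1, 0, 0, 0, 0, 0, 0, 0, 0, 0, 0, 0, 0, 0, 0, 0, 0],
     [0, 0, 0, 0, 1, 0, 0, 0, 0, 0, 0, 0, 0, 0, 0, 0, 0, 0, 0, 0, 0, 0],
     [0, 0, 0, 0, 0, 0, -2, -3, -4, -5, -6, -4, -2, -3, 0, 0, 0, 0, 0, 0, 0, 0],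
     [0, 0, 0, 0, 0, 0, -3, -6, -8, -10, -12, -8, -4, -6, 0, 0, 0, 0, 0, 0, 0, 0],
     [0, 0, 0, 0, 0, 0, -4, -8, -12, -15, -18, -12, -6, -9, 0, 0, 0, 0, 0, 0, 0, 0],
     [0, 0, 0, 0, 0, 0, -5, -10, -15, -20, -24, -16, -8, -12, 0, 0, 0, 0, 0, 0, 0, 0],
     [0, 0, 0, 0, 0, 0, -6, -12, -18, -24, -30, -20, -10, -15, 0, 0, 0, 0, 0, 0, 0, 0],
     [0, 0, 0, 0, 0, 0, -4, -8, -12, -16, -20, -14, -7, -10, 0, 0, 0, 0, 0, 0, 0, 0],
     [0, 0, 0, 0, 0, 0, -2, -4, -6, -8, -10, -7, -4, -5, 0, 0, 0, 0, 0, 0, 0, 0],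
     [0, 0, 0, 0, 0, 0, -3, -6, -9, -12, -15, -10, -5, -8, 0, 0, 0, 0, 0, 0, 0, 0],
     [0, 0, 0, 0, 0, 0, 0, 0, 0, 0, 0, 0, 0, 0, -2, -3, -4, -5, -6, -4, -2, -3],
     [0, 0, 0, 0, 0, 0, 0, 0, 0, 0, 0, 0, 0, 0, -3, -6, -8, -10, -12, -8, -4, -6],
     [0, 0, 0, 0, 0, 0, 0, 0, 0, 0, 0, 0, 0, 0, -4, -8, -12, -15, -18, -12, -6, -9],
     [0, 0, 0, 0, 0, 0, 0, 0, 0, 0, 0, 0, 0, 0, -5, -10, -15, -20, -24, -16, -8, -12],
     [0, 0, 0, 0, 0, 0, 0, 0, 0, 0, 0, 0, 0, 0, -6, -12, -18, -24, -30, -20, -10, -15],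
     [0, 0, 0, 0, 0, 0, 0, 0, 0, 0, 0, 0, 0, 0, -4, -8, -12, -16, -20, -14, -7, -10],
     [0, 0, 0, 0, 0, 0, 0, 0, 0, 0, 0, 0, 0, 0, -2, -4, -6, -8, -10, -7, -4, -5],
     [0, 0, 0, 0, 0, 0, 0, 0, 0, 0, 0, 0, 0, 0, -3, -6, -9, -12, -15, -10, -5, -8]]"

definition k3_gram_inv :: "nat \<Rightarrow> nat \<Rightarrow> int" where
  "k3_gram_inv i j = k3_gram_inv_rows ! i ! j"

lemma k3_gram_inv_list:
  "map (\<lambda>k. map (\<lambda>j. \<Sum>i\<leftarrow>[0..<22]. k3_gram_inv k i * k3_gram i j) [0..<22]) [0..<22]
   = map (\<lambda>k. map (\<lambda>j. of_bool (k = j)) [0..<22]) [0..<22]"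
  unfolding k3_gram_inv_def k3_gram_inv_rows_def by code_simp

lemma k3_gram_inv_mult:
  assumes "k < 22" "j < 22"
  shows "(\<Sum>i<22. k3_gram_inv k i * k3_gram i j) = of_bool (k = j)"
proof -
  have "(\<Sum>i<22. k3_gram_inv k i * k3_gram i j) = (\<Sum>i\<leftarrow>[0..<22]. k3_gram_inv k i * k3_gram i j)"
    by (simp add: sum_set_upt_conv_sum_list_nat[symmetric] atLeast_upt)
  also have "\<dots> = of_bool (k = j)"
    using k3_gram_inv_list assms by (simp add: map_eq_conv del: upt_Suc)
  finally show ?thesis .
qed

lemma sum_of_bool_delta:
  fixes f :: "nat \<Rightarrow> int"
  shows "k < m \<Longrightarrow> (\<Sum>j<m. of_bool (j = k) * f j) = f k"
  by (simp add: of_bool_def if_distrib [of "\<lambda>c. c * _"] cong: if_cong)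

lemma bil_represents_functional: "\<exists>x\<in>LK3. \<forall>y. bil x y = (\<Sum>j<22. \<phi> j * y j)"
proof -
  define x where "x = (\<lambda>i. if i < 22 then (\<Sum>k<22. \<phi> k * k3_gram_inv k i) else 0)"
  have x_gram: "(\<Sum>i<22. x i * k3_gram i j) = \<phi> j" if "j < 22" for j
  proof -
    have "(\<Sum>i<22. x i * k3_gram i j) = (\<Sum>i<22. \<Sum>k<22. \<phi> k * k3_gram_inv k i * k3_gram i j)"
      unfolding x_def by (intro sum.cong) (auto simp: sum_distrib_right)
    also have "\<dots> = (\<Sum>k<22. \<phi> k * (\<Sum>i<22. k3_gram_inv k i * k3_gram i j))"
      by (subst sum.swap) (simp add: sum_distrib_left mult.assoc)
    also have "\<dots> = (\<Sum>k<22. of_bool (k = j) * \<phi> k)"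
      using that by (intro sum.cong) (auto simp: k3_gram_inv_mult)
    also have "\<dots> = \<phi> j"
      using that by (rule sum_of_bool_delta)
    finally show ?thesis .
  qed
  have "bil x y = (\<Sum>j<22. \<phi> j * y j)" for y
  proof -
    have "bil x y = (\<Sum>j<22. (\<Sum>i<22. x i * k3_gram i j) * y j)"
      unfolding bil_def by (subst sum.swap) (simp add: sum_distrib_right)
    then show ?thesis
      using x_gram by simp
  qed
  moreover have "x \<in> LK3"
    unfolding LK3_def x_def by auto
  ultimately show ?thesis
    by blast
qed

lemma bil_represents_coordinate:
  assumes "k < 22"
  shows "\<exists>x\<in>LK3. \<forall>y. bil x y = y k"
proof -
  obtain x where x: "x \<in> LK3" "\<forall>y. bil x y = (\<Sum>j<22. of_bool (j = k) * y j)"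
    using bil_represents_functional[of "\<lambda>j. of_bool (j = k)"] by blast
  then have "\<forall>y. bil x y = y k"
    by (simp only: sum_of_bool_delta[OF assms] simp_thms)
  with x(1) show ?thesis
    by blast
qed

lemma bil_nondegenerate:
  assumes "z \<in> LK3" and "\<And>y. y \<in> LK3 \<Longrightarrow> bil z y = 0"
  shows "z = 0"
proof
  fix k
  show "z k = 0 k"
  proof (cases "k < 22")
    case True
    then obtain x where "x \<in> LK3" "\<forall>y. bil x y = y k"
      using bil_represents_coordinate by blast
    then show ?thesis
      using assms(2)[of x] bil_sym[of z x] by simp
  next
    case False
    then show ?thesis
      using assms(1) unfolding LK3_def by simp
  qed
qed

lemma LK3_even_imp_double:
  assumes "z \<in> LK3" and "\<And>k. k < 22 \<Longrightarrow> even (z k)"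
  shows "\<exists>w\<in>LK3. z = smul 2 w"
proof
  have "z i = 2 * (z i div 2)" for i
    using assms unfolding LK3_def by (cases "i < 22") auto
  then show "z = smul 2 (\<lambda>i. z i div 2)"
    by (simp add: fun_eq_iff)
  show "(\<lambda>i. z i div 2) \<in> LK3"
    using assms(1) unfolding LK3_def by auto
qed

lemma even_pairing_imp_double:
  assumes "z \<in> LK3" and "\<And>y. y \<in> LK3 \<Longrightarrow> even (bil z y)"
  shows "\<exists>w\<in>LK3. z = smul 2 w"
proof (rule LK3_even_imp_double[OF assms(1)])
  fix k :: nat
  assume "k < 22"
  then obtain x where "x \<in> LK3" "\<forall>y. bil x y = y k"
    using bil_represents_coordinate by blast
  then show "even (z k)"
    using assms(2)[of x] bil_sym[of z x] by simp
qed

lemma even_double_sum_minus_diagonal: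
  fixes a :: "nat \<Rightarrow> nat \<Rightarrow> int"
  assumes "\<And>i j. a i j = a j i"
  shows "even ((\<Sum>i<n. \<Sum>j<n. a i j) - (\<Sum>i<n. a i i))"
proof (induction n)
  case (Suc n)
  have "(\<Sum>i<Suc n. \<Sum>j<Suc n. a i j) - (\<Sum>i<Suc n. a i i)
      = ((\<Sum>i<n. \<Sum>j<n. a i j) - (\<Sum>i<n. a i i)) + 2 * (\<Sum>j<n. a n j)"
    using assms by (simp add: sum.distrib)
  then show ?case
    using Suc by simp
qed simp

lemma k3_gram_diagonal_even: "even (k3_gram i i)"
  unfolding k3_gram_def e8_gram_def by simp

lemma bil_self_even: "even (bil z z)"
proof -
  let ?all = "\<Sum>i<22. \<Sum>j<22. z i * k3_gram i j * z j" and ?diag = "\<Sum>i<22. z i * k3_gram i i * z i"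
  have "even (?all - ?diag)"
    by (rule even_double_sum_minus_diagonal) (metis k3_gram_sym mult.commute mult.assoc)
  moreover have "even ?diag"
    by (intro dvd_sum) (simp add: k3_gram_diagonal_even)
  moreover have "bil z z = (?all - ?diag) + ?diag"
    unfolding bil_def by simp
  ultimately show ?thesis
    by simp
qed

lemma sum_combination_eq_Gcd:
  fixes v :: "nat \<Rightarrow> int"
  shows "\<exists>a. (\<Sum>i<m. a i * v i) = Gcd (v ` {..<m})"
proof (induction m)
  case 0
  show ?case by simp
next
  case (Suc m)
  then obtain a where a: "(\<Sum>i<m. a i * v i) = Gcd (v ` {..<m})" ..
  obtain u w where uw: "u * v m + w * Gcd (v ` {..<m}) = gcd (v m) (Gcd (v ` {..<m}))"
    using bezout_int by blast
  let ?a = "\<lambda>i. if i = m then u else w * a i"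
  have "(\<Sum>i<Suc m. ?a i * v i) = u * v m + w * (\<Sum>i<m. a i * v i)"
    by (simp add: sum_distrib_left mult.assoc)
  also have "\<dots> = Gcd (v ` {..<Suc m})"
    using a uw by (simp add: lessThan_Suc)
  finally show ?case
    by (rule exI[of _ ?a])
qed

text \<open>The coordinates of a primitive vector are coprime; a Bezout combination of them is a
  linear functional, which the unimodular form represents.\<close>

lemma primitive_imp_bil_eq_1:
  assumes r: "r \<in> LK3" "r \<noteq> 0"
    and primitive: "\<And>k y. y \<in> LK3 \<Longrightarrow> r = smul k y \<Longrightarrow> \<bar>k\<bar> = 1"
  shows "\<exists>x\<in>LK3. bil x r = 1"
proof -
  define g where "g = Gcd (r ` {..<22})"
  obtain a where a: "(\<Sum>i<22. a i * r i) = g"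
    unfolding g_def using sum_combination_eq_Gcd by blast
  have "g dvd r i" for i
    using r(1) unfolding g_def LK3_def by (cases "i < 22") auto
  then have "r = smul g (\<lambda>i. r i div g)"
    by (simp add: fun_eq_iff)
  moreover have "(\<lambda>i. r i div g) \<in> LK3"
    using r(1) unfolding LK3_def by auto
  ultimately have "\<bar>g\<bar> = 1"
    by (rule primitive[rotated])
  then have "g = 1"
    unfolding g_def by simp
  obtain x where x: "x \<in> LK3" "\<forall>y. bil x y = (\<Sum>j<22. a j * y j)"
    using bil_represents_functional[of a] by blast
  moreover have "bil x r = 1"
    using x a \<open>g = 1\<close> by simp
  ultimately show ?thesis
    by blast
qed

lemma bil_add_self: "bil (x + y) (x + y) = bil x x + 2 * bil x y + bil y y"
  by (simp add: bil_add_left bil_add_right bil_sym[of y x])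

lemma even_sum_of_bool_delta:
  fixes a c :: "nat \<Rightarrow> int"
  assumes "\<And>j. j < m \<Longrightarrow> even (a j - of_bool (j = l))" and "l < m"
  shows "even ((\<Sum>j<m. c j * a j) - c l)"
proof -
  have "(\<Sum>j<m. c j * a j) - c l = (\<Sum>j<m. c j * (a j - of_bool (j = l)))"
    using sum_of_bool_delta[OF assms(2), of c]
    by (simp add: right_diff_distrib sum_subtractf mult.commute)
  also have "even \<dots>"
    using assms(1) by (intro dvd_sum) simp
  finally show ?thesis .
qed

text \<open>Gram--Schmidt modulo 2: vectors that stay independent modulo 2 LK3 have a dual family
  modulo 2.\<close>

lemma mod2_dual_vector:
  assumes dual: "\<And>k j. k < m \<Longrightarrow> j < m \<Longrightarrow> even (bil (f j) (y k) - of_bool (j = k))"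
    and independent: "\<And>c. (\<exists>j<Suc m. odd (c j)) \<Longrightarrow> \<exists>z\<in>LK3. odd (\<Sum>j<Suc m. c j * bil (f j) z)"
    and y: "\<And>k. k < m \<Longrightarrow> y k \<in> LK3"
  shows "\<exists>x\<in>LK3. (\<forall>i<m. even (bil (f i) x)) \<and> odd (bil (f m) x)"
proof -
  define c where "c j = (if j = m then 1 else - bil (f m) (y j))" for j
  have "\<exists>j<Suc m. odd (c j)"
    by (auto simp: c_def intro!: exI[of _ m])
  then obtain z where z: "z \<in> LK3" "odd (\<Sum>j<Suc m. c j * bil (f j) z)"
    using independent by blast
  define x where "x = z - (\<Sum>j<m. smul (bil (f j) z) (y j))"
  have bil_x: "bil v x = bil v z - (\<Sum>j<m. bil (f j) z * bil v (y j))" for v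
    unfolding x_def by (simp add: bil_diff_right bil_sum_right bil_smul_right)
  have "even (bil (f i) x)" if "i < m" for i
  proof -
    have "even ((\<Sum>j<m. bil (f j) z * bil (f i) (y j)) - bil (f i) z)"
      using dual[OF _ that] that by (intro even_sum_of_bool_delta) (auto simp: eq_commute)
    then show ?thesis
      unfolding bil_x by (metis minus_diff_eq even_minus)
  qed
  moreover have "bil (f m) x = (\<Sum>j<Suc m. c j * bil (f j) z)"
    unfolding bil_x by (simp add: c_def sum_negf[symmetric] mult.commute)
  then have "odd (bil (f m) x)"
    using z(2) by (simp only: not_False_eq_True)
  moreover have "x \<in> LK3"
    unfolding x_def using z(1) y by auto
  ultimately show ?thesis
    by blast
qed

lemma mod2_dual_family:
  fixes f :: "nat \<Rightarrow> nat \<Rightarrow> int" and m :: nat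
  assumes "\<And>c. (\<exists>j<m. odd (c j)) \<Longrightarrow> \<exists>z\<in>LK3. odd (\<Sum>j<m. c j * bil (f j) z)"
  shows "\<exists>y. \<forall>k<m. y k \<in> LK3 \<and> (\<forall>j<m. even (bil (f j) (y k) - of_bool (j = k)))"
  using assms
proof (induction m)
  case 0
  show ?case by simp
next
  case (Suc m)
  have "\<exists>z\<in>LK3. odd (\<Sum>j<m. c j * bil (f j) z)" if "\<exists>j<m. odd (c j)" for c
    using Suc.prems[of "c(m := 0)"] that by (force simp: less_Suc_eq)
  then obtain y where y: "\<forall>k<m. y k \<in> LK3 \<and> (\<forall>j<m. even (bil (f j) (y k) - of_bool (j = k)))"
    using Suc.IH by blast
  obtain x where x: "x \<in> LK3" "\<forall>i<m. even (bil (f i) x)" "odd (bil (f m) x)"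
    using mod2_dual_vector[of m f y] Suc.prems y by blast
  define y' where "y' k = (if k = m then x else y k - smul (bil (f m) (y k)) x)" for k
  have "even (bil (f j) (y' k) - of_bool (j = k))" if "k < Suc m" "j < Suc m" for j k
  proof (cases "k = m")
    case False
    have "bil (f j) (y' k) - of_bool (j = k)
        = (bil (f j) (y k) - of_bool (j = k)) - bil (f m) (y k) * bil (f j) x"
      using False by (simp add: y'_def bil_diff_right bil_smul_right)
    moreover have "even (bil (f j) (y k) - of_bool (j = k))" if "j < m"
      using y that \<open>k < Suc m\<close> False by auto
    moreover have "bil (f m) (y k) * bil (f j) x - bil (f m) (y k) = bil (f m) (y k) * (bil (f j) x - 1)"
      by (simp add: algebra_simps)
    ultimately show ?thesis
      using x that False by (cases "j = m") auto
  qed (use x that in \<open>auto simp: y'_def less_Suc_eq\<close>)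
  moreover have "y' k \<in> LK3" if "k < Suc m" for k
    using x y that by (auto simp: y'_def)
  ultimately show ?case
    by blast
qed

section \<open>Kernels and images in finite abelian groups\<close>

definition add_subgroup :: "'a::ab_group_add set \<Rightarrow> bool" where
  "add_subgroup A \<longleftrightarrow> 0 \<in> A \<and> (\<forall>x\<in>A. \<forall>y\<in>A. x - y \<in> A)"

lemma add_subgroup_image:
  assumes "add_subgroup A" and hom: "\<And>x y. x \<in> A \<Longrightarrow> y \<in> A \<Longrightarrow> f (x - y) = f x - f y"
  shows "add_subgroup (f ` A)"
proof -
  have "f 0 = 0"
    using assms hom[of 0 0] unfolding add_subgroup_def by simp
  then show ?thesis
    using assms unfolding add_subgroup_def by (force simp: hom[symmetric])
qed

lemma card_eq_card_kernel_mult_card_image: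
  fixes f :: "'a::ab_group_add \<Rightarrow> 'b::ab_group_add"
  assumes "finite A" and A: "add_subgroup A"
    and hom: "\<And>x y. x \<in> A \<Longrightarrow> y \<in> A \<Longrightarrow> f (x - y) = f x - f y"
  shows "card A = card {x\<in>A. f x = 0} * card (f ` A)"
proof -
  let ?K = "{x\<in>A. f x = 0}"
  have diff: "x - y \<in> A" if "x \<in> A" "y \<in> A" for x y
    using A that unfolding add_subgroup_def by blast
  have add: "x + y \<in> A" if "x \<in> A" "y \<in> A" for x y
  proof -
    have "0 - y \<in> A"
      using A that(2) unfolding add_subgroup_def by blast
    then show ?thesis
      using diff[OF that(1)] by fastforce
  qed
  have fibre: "card {x\<in>A. f x = f a} = card ?K" if "a \<in> A" for a
  proof (rule bij_betw_same_card[of "\<lambda>x. x - a"])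
    show "bij_betw (\<lambda>x. x - a) {x\<in>A. f x = f a} ?K"
    proof (rule bij_betwI[where g = "\<lambda>k. k + a"])
      show "(\<lambda>k. k + a) \<in> ?K \<rightarrow> {x\<in>A. f x = f a}"
        using that add hom[of _ a] by (force simp: eq_diff_eq)
    qed (use that diff hom in auto)
  qed
  have "card A = card (\<Union>b\<in>f ` A. {x\<in>A. f x = b})"
    by (rule arg_cong[of _ _ card]) auto
  also have "\<dots> = (\<Sum>b\<in>f ` A. card {x\<in>A. f x = b})"
    using \<open>finite A\<close> by (intro card_UN_disjoint) auto
  also have "\<dots> = (\<Sum>b\<in>f ` A. card ?K)"
    using fibre by (intro sum.cong) auto
  finally show ?thesis
    by simp
qed

lemma eq_of_le_chain_mult_eq_square:
  fixes a b c :: nat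
  assumes "c \<le> b" and "b \<le> a" and "0 < c" and "a * b = c * c"
  shows "a = c"
proof (rule ccontr)
  assume "a \<noteq> c"
  then have "c * b < a * b"
    using assms by (intro mult_strict_right_mono) auto
  moreover have "c * c \<le> c * b"
    using assms(1) by simp
  ultimately show False
    using assms(4) by simp
qed

text \<open>With k B the number of elements of B killed by N, |B| = k B * |N B| for every subgroup B,
  and the numerical hypothesis forces k A = k (N (N A)).\<close>

lemma kernel_subset_image_image:
  fixes N :: "'a::ab_group_add \<Rightarrow> 'a"
  assumes "finite A" and A: "add_subgroup A" and maps: "N ` A \<subseteq> A"
    and hom: "\<And>x y. x \<in> A \<Longrightarrow> y \<in> A \<Longrightarrow> N (x - y) = N x - N y"
    and card: "card A * card (N ` N ` N ` A) ^ 2 = card (N ` N ` A) ^ 3"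
  shows "{x\<in>A. N x = 0} \<subseteq> N ` N ` A"
proof -
  define k where "k B = card {x\<in>B. N x = 0}" for B
  have count: "card B = k B * card (N ` B)" if "B \<subseteq> A" "add_subgroup B" for B
    unfolding k_def using that hom finite_subset[OF that(1) \<open>finite A\<close>]
    by (intro card_eq_card_kernel_mult_card_image) (auto simp: subset_eq)
  have sub: "N ` A \<subseteq> A" "N ` N ` A \<subseteq> N ` A"
    using maps by auto
  have groups: "add_subgroup (N ` A)" "add_subgroup (N ` N ` A)"
    using add_subgroup_image[OF A hom] add_subgroup_image[of "N ` A" N] hom sub(1) by auto
  have fin: "finite (N ` A)" "finite (N ` N ` A)"
    using \<open>finite A\<close> by simp_all
  have c: "card A = k A * card (N ` A)" "card (N ` A) = k (N ` A) * card (N ` N ` A)"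
    "card (N ` N ` A) = k (N ` N ` A) * card (N ` N ` N ` A)"
    using count[OF order.refl A] count[OF sub(1) groups(1)] count[OF _ groups(2)] sub by auto
  have mono: "k (N ` N ` A) \<le> k (N ` A)" "k (N ` A) \<le> k A"
    unfolding k_def using sub by (intro card_mono finite_subset[OF Collect_restrict] fin \<open>finite A\<close>; blast)+
  have "N 0 = 0"
    using hom[of 0 0] A unfolding add_subgroup_def by simp
  then have "0 \<in> {x\<in>N ` N ` A. N x = 0}"
    using groups(2) unfolding add_subgroup_def by blast
  moreover have "finite {x\<in>N ` N ` A. N x = 0}"
    using fin(2) by (rule finite_subset[rotated]) blast
  ultimately have k2_pos: "k (N ` N ` A) > 0"
    unfolding k_def by (metis card_gt_0_iff empty_iff)
  have "card (N ` N ` N ` A) > 0"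
    using groups(2) fin(2) unfolding add_subgroup_def by (subst card_gt_0_iff) auto
  moreover have "(k A * k (N ` A)) * (k (N ` N ` A) * card (N ` N ` N ` A) ^ 3)
      = (k (N ` N ` A) * k (N ` N ` A)) * (k (N ` N ` A) * card (N ` N ` N ` A) ^ 3)"
    using card unfolding c(1) c(2) c(3) by (simp add: power2_eq_square power3_eq_cube algebra_simps)
  ultimately have "k A * k (N ` A) = k (N ` N ` A) * k (N ` N ` A)"
    using k2_pos by simp
  then have "k A = k (N ` N ` A)"
    using eq_of_le_chain_mult_eq_square mono k2_pos by (meson order.trans)
  then have "{x\<in>N ` N ` A. N x = 0} = {x\<in>A. N x = 0}"
    unfolding k_def using \<open>finite A\<close> sub by (intro card_seteq) auto
  then show ?thesis
    by blast
qed

section \<open>The lattices L_+ and L_-\<close>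

definition lc :: "(nat \<Rightarrow> nat \<Rightarrow> int) \<Rightarrow> (nat \<Rightarrow> int) \<Rightarrow> nat \<Rightarrow> int" where
  "lc e c = (\<Sum>k<8. smul (c k) (e k))"

lemma lc_diff: "lc e c - lc e d = lc e (\<lambda>k. c k - d k)"
  unfolding lc_def by (simp add: sum_subtractf[symmetric] fun_eq_iff sum_fun_apply algebra_simps)

lemma lc_smul: "smul a (lc e c) = lc e (\<lambda>k. a * c k)"
  unfolding lc_def by (simp add: fun_eq_iff sum_fun_apply sum_distrib_left algebra_simps)

lemma bil_lc_left: "bil (lc e c) y = (\<Sum>j<8. c j * bil (e j) y)"
  unfolding lc_def by (simp add: bil_sum_left bil_smul_left)

definition e_sq :: "nat \<Rightarrow> int" where
  "e_sq k = (if k = 0 then 2 else -2)"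

lemma e_sq_cases: "e_sq k = 2 \<or> e_sq k = -2"
  unfolding e_sq_def by auto

lemma e_sq_even: "even (e_sq k)"
  unfolding e_sq_def by simp

lemma four_dvd_mult_e_sq:
  fixes b c :: int
  assumes "even (b - c)"
  shows "4 dvd (c * e_sq k - 2 * b)"
  using e_sq_cases[of k]
proof
  assume "e_sq k = 2"
  then show ?thesis
    using assms by simp presburger
next
  assume "e_sq k = -2"
  then show ?thesis
    using assms by simp presburger
qed

lemma four_dvd_square_e_sq:
  fixes a c :: int
  assumes "even a" and "\<not> 4 dvd a"
  shows "4 dvd (c * c * e_sq k - c * a)"
proof -
  obtain q where q: "a = 2 * q"
    using assms(1) by blast
  have "odd q"
    using assms(2) q by auto
  have "c * c * e_sq k - c * a = 2 * c * (c * (e_sq k div 2) - q)"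
    unfolding q e_sq_def by (simp add: algebra_simps)
  moreover have "odd (e_sq k div 2)"
    unfolding e_sq_def by simp
  then have "even (c * (c * (e_sq k div 2) - q))"
    using \<open>odd q\<close> by auto
  then obtain t where "c * (c * (e_sq k div 2) - q) = 2 * t"
    by blast
  ultimately show ?thesis
    by (simp add: mult.assoc)
qed

locale quartic_K3 =
  fixes S :: "nat \<Rightarrow> nat \<Rightarrow> int" and e :: "nat \<Rightarrow> nat \<Rightarrow> int" and h :: "nat \<Rightarrow> int"
  assumes isometry: "\<And>x y. x \<in> LK3 \<Longrightarrow> y \<in> LK3 \<Longrightarrow> bil (mat_app S x) (mat_app S y) = bil x y"
    and order_4: "\<And>x. x \<in> LK3 \<Longrightarrow> mat_app S (mat_app S (mat_app S (mat_app S x))) = x"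
    and Lplus_eq_range_lc: "Lplus S = range (lc e)"
    and e_gram: "\<And>k l. k < 8 \<Longrightarrow> l < 8 \<Longrightarrow> bil (e k) (e l) = (if k = l then e_sq k else 0)"
    and fixed_eq_multiples_h: "{x\<in>LK3. mat_app S x = x} = range (\<lambda>c. smul c h)"
    and h_square: "bil h h = 4"

lemma quartic_K3_sigma_imp_quartic_K3:
  assumes "quartic_K3_sigma S"
  shows "\<exists>e h. quartic_K3 S e h"
proof -
  have lc_eq: "(\<lambda>i. \<Sum>k<8. c k * e k i) = lc e c" for c and e :: "nat \<Rightarrow> nat \<Rightarrow> int"
    unfolding lc_def by (simp add: fun_eq_iff sum_fun_apply)
  from assms obtain e :: "nat \<Rightarrow> nat \<Rightarrow> int" and h where
    "\<forall>x\<in>LK3. \<forall>y\<in>LK3. bil (mat_app S x) (mat_app S y) = bil x y"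
    "\<forall>x\<in>LK3. mat_app S (mat_app S (mat_app S (mat_app S x))) = x"
    "{x\<in>LK3. mat_app S (mat_app S x) = x} = {(\<lambda>i. \<Sum>k<8. c k * e k i) | c. True}"
    "\<forall>k<8. \<forall>l<8. bil (e k) (e l) = (if k = l then (if k = 0 then 2 else -2) else 0)"
    "{x\<in>LK3. mat_app S x = x} = {smul c h | c. True}" "bil h h = 4"
    unfolding quartic_K3_sigma_def by (elim conjE exE) (rule that)
  then have "quartic_K3 S e h"
    unfolding quartic_K3_def Lplus_def e_sq_def lc_eq by (auto simp: full_SetCompr_eq)
  then show ?thesis
    by blast
qed

context quartic_K3
begin

abbreviation \<sigma> :: "(nat \<Rightarrow> int) \<Rightarrow> nat \<Rightarrow> int" where
  "\<sigma> x \<equiv> mat_app S x"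

abbreviation \<tau> :: "(nat \<Rightarrow> int) \<Rightarrow> nat \<Rightarrow> int" where
  "\<tau> x \<equiv> \<sigma> (\<sigma> x)"

lemma mem_Lplus: "x \<in> Lplus S \<longleftrightarrow> x \<in> LK3 \<and> \<tau> x = x"
  unfolding Lplus_def by simp

lemma mem_Lminus: "x \<in> Lminus S \<longleftrightarrow> x \<in> LK3 \<and> \<tau> x = - x"
  unfolding Lminus_def by simp

lemma tau_tau: "x \<in> LK3 \<Longrightarrow> \<tau> (\<tau> x) = x"
  using order_4 by simp

lemma bil_tau_left: "x \<in> LK3 \<Longrightarrow> y \<in> LK3 \<Longrightarrow> bil (\<tau> x) y = bil x (\<tau> y)"
  using isometry[of "\<sigma> x" "\<sigma> (\<tau> y)"] isometry[of x "\<tau> y"] tau_tau[of y] by simp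

lemma Lplus_diff: "x \<in> Lplus S \<Longrightarrow> y \<in> Lplus S \<Longrightarrow> x - y \<in> Lplus S"
  unfolding mem_Lplus by (auto simp: mat_app_diff)

lemma Lminus_add: "x \<in> Lminus S \<Longrightarrow> y \<in> Lminus S \<Longrightarrow> x + y \<in> Lminus S"
  unfolding mem_Lminus by (auto simp: mat_app_add)

lemma Lminus_diff: "x \<in> Lminus S \<Longrightarrow> y \<in> Lminus S \<Longrightarrow> x - y \<in> Lminus S"
  unfolding mem_Lminus by (auto simp: mat_app_diff)

lemma Lminus_smul: "x \<in> Lminus S \<Longrightarrow> smul c x \<in> Lminus S"
  unfolding mem_Lminus by (auto simp: mat_app_smul mat_app_uminus)

lemma Lminus_sigma: "x \<in> Lminus S \<Longrightarrow> \<sigma> x \<in> Lminus S"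
  unfolding mem_Lminus by (auto simp: mat_app_uminus)

lemma plus_tau_in_Lplus: "x \<in> LK3 \<Longrightarrow> x + \<tau> x \<in> Lplus S"
  unfolding mem_Lplus by (auto simp: mat_app_add tau_tau)

lemma minus_tau_in_Lminus: "x \<in> LK3 \<Longrightarrow> x - \<tau> x \<in> Lminus S"
  unfolding mem_Lminus by (auto simp: mat_app_diff tau_tau)

lemma Lplus_Lminus_orthogonal: "u \<in> Lplus S \<Longrightarrow> v \<in> Lminus S \<Longrightarrow> bil u v = 0"
  using bil_tau_left[of u v] by (simp add: mem_Lplus mem_Lminus bil_minus_right)

lemma bil_plus_tau_Lplus: "x \<in> LK3 \<Longrightarrow> u \<in> Lplus S \<Longrightarrow> bil (x + \<tau> x) u = 2 * bil x u"
  using bil_tau_left[of x u] by (simp add: mem_Lplus bil_add_left)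

lemma Lminus_sigma_orthogonal:
  assumes "v \<in> Lminus S"
  shows "bil v (\<sigma> v) = 0"
proof -
  have "bil v (\<sigma> v) = bil (\<sigma> v) (- v)"
    using isometry[of v "\<sigma> v"] assms by (simp add: mem_Lminus)
  also have "\<dots> = - bil v (\<sigma> v)"
    by (simp add: bil_minus_right bil_sym[of "\<sigma> v" v])
  finally show ?thesis
    by simp
qed

lemma h_fixed: "h \<in> LK3" "\<sigma> h = h"
proof -
  have "h \<in> {x\<in>LK3. \<sigma> x = x}"
    unfolding fixed_eq_multiples_h using rangeI[of "\<lambda>c. smul c h" 1] by simp
  then show "h \<in> LK3" "\<sigma> h = h"
    by simp_all
qed

lemma fixed_imp_multiple_h: "x \<in> LK3 \<Longrightarrow> \<sigma> x = x \<Longrightarrow> \<exists>c. x = smul c h"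
  using fixed_eq_multiples_h by (metis (mono_tags, lifting) image_iff mem_Collect_eq)

lemma Lplus_plus_sigma:
  assumes "u \<in> Lplus S"
  shows "even (bil u h)" and "u + \<sigma> u = smul (bil u h div 2) h"
proof -
  have u: "u \<in> LK3" "\<tau> u = u"
    using assms by (simp_all add: mem_Lplus)
  then obtain c where c: "u + \<sigma> u = smul c h"
    using fixed_imp_multiple_h[of "u + \<sigma> u"] by (auto simp: mat_app_add)
  have "2 * bil u h = 4 * c"
    using arg_cong[OF c, of "\<lambda>x. bil x h"] isometry[of u h] u h_fixed
    by (simp add: bil_add_left bil_smul_left h_square)
  then show "even (bil u h)" "u + \<sigma> u = smul (bil u h div 2) h"
    using c by auto
qed

lemma zero_in_Lplus: "0 \<in> Lplus S"
  by (simp add: mem_Lplus)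

lemma lc_in_Lplus: "lc e c \<in> Lplus S"
  using Lplus_eq_range_lc by blast

lemma Lplus_imp_lc: "u \<in> Lplus S \<Longrightarrow> \<exists>c. u = lc e c"
  using Lplus_eq_range_lc by blast

lemma e_in_Lplus: "k < 8 \<Longrightarrow> e k \<in> Lplus S"
proof -
  assume "k < 8"
  then have "lc e (\<lambda>j. of_bool (j = k)) = e k"
    unfolding lc_def by (simp add: of_bool_def if_distrib[of "\<lambda>c. smul c _"] cong: if_cong)
  then show ?thesis
    using lc_in_Lplus by metis
qed

lemma bil_lc_e:
  assumes "l < 8"
  shows "bil (lc e c) (e l) = c l * e_sq l"
proof -
  have "bil (lc e c) (e l) = (\<Sum>j<8. of_bool (j = l) * (c j * e_sq j))"
    unfolding bil_lc_left using assms by (intro sum.cong) (auto simp: e_gram)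
  then show ?thesis
    using sum_of_bool_delta[OF assms] by simp
qed

lemma bil_lc_lc: "bil (lc e c) (lc e d) = (\<Sum>k<8. c k * d k * e_sq k)"
  unfolding bil_lc_left by (simp add: bil_sym[of "e _"] bil_lc_e mult.assoc)

lemma Lplus_bil_even: "u \<in> Lplus S \<Longrightarrow> u' \<in> Lplus S \<Longrightarrow> even (bil u u')"
  using Lplus_imp_lc[of u] Lplus_imp_lc[of u'] e_sq_even
  by (auto simp: bil_lc_lc intro!: dvd_sum)

lemma Lplus_half:
  assumes "u \<in> Lplus S" and "\<And>l. l < 8 \<Longrightarrow> 4 dvd bil u (e l)"
  shows "\<exists>w\<in>Lplus S. u = smul 2 w"
proof -
  obtain c where c: "u = lc e c"
    using Lplus_imp_lc assms(1) by blast
  have "even (c l)" if "l < 8" for l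
    using assms(2)[OF that] e_sq_cases[of l] unfolding c bil_lc_e[OF that]
    by (elim disjE; simp; presburger)
  then have "lc e c = lc e (\<lambda>k. 2 * (c k div 2))"
    unfolding lc_def by (intro sum.cong) auto
  then have "lc e c = smul 2 (lc e (\<lambda>k. c k div 2))"
    by (simp add: lc_smul)
  then show ?thesis
    using c lc_in_Lplus by blast
qed

lemma lc_double_imp_even:
  assumes "lc e c = smul 2 w" and "w \<in> LK3" and "k < 8"
  shows "even (c k)"
proof -
  have "smul 2 (\<tau> w) = smul 2 w"
    using lc_in_Lplus[of c] assms(1) by (simp add: mem_Lplus mat_app_smul[symmetric])
  then have "w \<in> Lplus S"
    using assms(2) smul_cancel[of 2] by (simp add: mem_Lplus)
  then obtain d where "w = lc e d"
    using Lplus_imp_lc by blast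
  then have "c k * e_sq k = 2 * (d k * e_sq k)"
    using arg_cong[OF assms(1), of "\<lambda>x. bil x (e k)"] assms(3)
    by (simp add: bil_lc_e bil_smul_left)
  then show ?thesis
    using e_sq_cases[of k] by auto
qed

lemma e_mod2_independent:
  assumes "\<exists>j<8. odd (c j)"
  shows "\<exists>y\<in>LK3. odd (\<Sum>j<8. c j * bil (e j) y)"
proof (rule ccontr)
  assume "\<not> ?thesis"
  then have "\<And>y. y \<in> LK3 \<Longrightarrow> even (bil (lc e c) y)"
    by (auto simp: bil_lc_left)
  then obtain w where "w \<in> LK3" "lc e c = smul 2 w"
    using even_pairing_imp_double lc_in_Lplus mem_Lplus by blast
  then show False
    using lc_double_imp_even assms by blast
qed

definition e_dual :: "nat \<Rightarrow> nat \<Rightarrow> int" where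
  "e_dual = (SOME y. \<forall>k<8. y k \<in> LK3 \<and> (\<forall>j<8. even (bil (e j) (y k) - of_bool (j = k))))"

lemma e_dual: "k < 8 \<Longrightarrow> e_dual k \<in> LK3"
  "k < 8 \<Longrightarrow> j < 8 \<Longrightarrow> even (bil (e j) (e_dual k) - of_bool (j = k))"
  using someI_ex[OF mod2_dual_family[OF e_mod2_independent]] unfolding e_dual_def by blast+

lemma e_dual_combination:
  "l < 8 \<Longrightarrow> even (bil (e l) (\<Sum>j<8. smul (c j) (e_dual j)) - c l)"
  unfolding bil_sum_right bil_smul_right
  by (rule even_sum_of_bool_delta) (use e_dual(2) in \<open>auto simp: eq_commute\<close>)

lemma bil_lc_e_dual: "j < 8 \<Longrightarrow> even (bil (lc e c) (e_dual j) - c j)"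
  unfolding bil_lc_left by (rule even_sum_of_bool_delta) (use e_dual(2) in auto)

lemma Lplus_eq_plus_tau_image: "Lplus S = (\<lambda>y. y + \<tau> y) ` LK3"
proof
  show "(\<lambda>y. y + \<tau> y) ` LK3 \<subseteq> Lplus S"
    using plus_tau_in_Lplus by auto
next
  show "Lplus S \<subseteq> (\<lambda>y. y + \<tau> y) ` LK3"
  proof
    fix u
    assume u: "u \<in> Lplus S"
    then obtain c where c: "u = lc e c"
      using Lplus_imp_lc by blast
    define y where "y = (\<Sum>j<8. smul (c j) (e_dual j))"
    have y: "y \<in> LK3"
      unfolding y_def using e_dual(1) by auto
    have "4 dvd bil (u - (y + \<tau> y)) (e l)" if "l < 8" for l
    proof -
      have "even (bil y (e l) - c l)"
        using e_dual_combination[OF that] bil_sym unfolding y_def by metis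
      moreover have "bil (u - (y + \<tau> y)) (e l) = c l * e_sq l - 2 * bil y (e l)"
        using that y e_in_Lplus by (simp add: c bil_diff_left bil_lc_e bil_plus_tau_Lplus)
      ultimately show ?thesis
        using four_dvd_mult_e_sq by simp
    qed
    then obtain w where w: "w \<in> Lplus S" "u - (y + \<tau> y) = smul 2 w"
      using Lplus_half Lplus_diff plus_tau_in_Lplus u y by blast
    then have "u = (y + w) + \<tau> (y + w)"
      by (simp add: mem_Lplus smul_two mat_app_add algebra_simps eq_diff_eq)
    then show "u \<in> (\<lambda>y. y + \<tau> y) ` LK3"
      using y w(1) by (auto simp: mem_Lplus)
  qed
qed

lemma even_on_e_imp_Lplus_plus_Lminus:
  assumes "w \<in> LK3" and "\<And>l. l < 8 \<Longrightarrow> even (bil w (e l))"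
  shows "\<exists>u\<in>Lplus S. \<exists>v\<in>Lminus S. w = u + v"
proof -
  have "4 dvd bil (w + \<tau> w) (e l)" if "l < 8" for l
    using assms(2)[OF that] bil_plus_tau_Lplus[OF assms(1) e_in_Lplus[OF that]] by auto
  then obtain u where u: "u \<in> Lplus S" "w + \<tau> w = smul 2 u"
    using Lplus_half plus_tau_in_Lplus assms(1) by blast
  have "w - u \<in> Lminus S"
    using u assms(1) by (auto simp: mem_Lplus mem_Lminus mat_app_diff smul_two algebra_simps eq_diff_eq)
  then show ?thesis
    using u(1) by force
qed

lemma Lminus_nondegenerate:
  assumes "z \<in> Lminus S" and "\<And>y. y \<in> Lminus S \<Longrightarrow> bil z y = 0"
  shows "z = 0"
proof (rule bil_nondegenerate)
  show "z \<in> LK3"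
    using assms(1) by (simp add: mem_Lminus)
  fix w
  assume w: "w \<in> LK3"
  have "bil z (w - \<tau> w) = 0"
    using assms(2) minus_tau_in_Lminus[OF w] by blast
  moreover have "bil z (w + \<tau> w) = 0"
    using Lplus_Lminus_orthogonal[OF plus_tau_in_Lplus[OF w] assms(1)] by (simp add: bil_sym)
  moreover have "bil z (w - \<tau> w) + bil z (w + \<tau> w) = 2 * bil z w"
    by (simp add: bil_diff_right bil_add_right)
  ultimately show "bil z w = 0"
    by simp
qed

lemma even_pairing_lc_dual_plus:
  assumes v: "v \<in> Lminus S" and even: "\<And>y. y \<in> Lminus S \<Longrightarrow> even (bil v y)" and y: "y \<in> LK3"
  shows "even (bil (lc e (\<lambda>j. bil v (e_dual j)) + v) y)"
proof -
  let ?p = "lc e (\<lambda>j. bil v (e_dual j))"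
  define y' where "y' = (\<Sum>j<8. smul (bil (e j) y) (e_dual j))"
  have even_e: "even (bil (y - y') (e l))" if "l < 8" for l
  proof -
    have "bil (y - y') (e l) = bil (e l) y - bil (e l) y'"
      by (simp only: bil_diff_left bil_sym[of y] bil_sym[of y'])
    then show ?thesis
      using e_dual_combination[OF that, of "\<lambda>j. bil (e j) y"] unfolding y'_def by simp
  qed
  have "y - y' \<in> LK3"
    unfolding y'_def using y e_dual(1) by (intro LK3_diff LK3_sum LK3_smul) auto
  then obtain u m where um: "u \<in> Lplus S" "m \<in> Lminus S" "y - y' = u + m"
    using even_on_e_imp_Lplus_plus_Lminus even_e by blast
  have "bil (?p + v) (y - y') = bil ?p u + bil v m"
    using Lplus_Lminus_orthogonal[OF lc_in_Lplus um(2)] Lplus_Lminus_orthogonal[OF um(1) v]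
    by (simp add: um(3) bil_add_left bil_add_right bil_sym[of v u])
  moreover have "even (bil ?p u)" "even (bil v m)"
    using Lplus_bil_even[OF lc_in_Lplus um(1)] even[OF um(2)] by simp_all
  moreover have "even (bil (?p + v) (e_dual j))" if "j < 8" for j
    using bil_lc_e_dual[OF that, of "\<lambda>j. bil v (e_dual j)"] by (simp add: bil_add_left even_diff)
  then have "even (bil (?p + v) y')"
    unfolding y'_def bil_sum_right bil_smul_right by (intro dvd_sum) simp
  ultimately show ?thesis
    by (metis bil_diff_right even_add diff_add_cancel)
qed

lemma Lminus_even_pairing_imp_minus_tau:
  assumes v: "v \<in> Lminus S" and even: "\<And>y. y \<in> Lminus S \<Longrightarrow> even (bil v y)"
  shows "\<exists>x\<in>LK3. x - \<tau> x = v"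
proof -
  let ?p = "lc e (\<lambda>j. bil v (e_dual j))"
  have "?p + v \<in> LK3"
    using lc_in_Lplus v by (auto simp: mem_Lplus mem_Lminus)
  then obtain x where x: "x \<in> LK3" "?p + v = smul 2 x"
    using even_pairing_imp_double even_pairing_lc_dual_plus[OF v even] by blast
  have "smul 2 (x - \<tau> x) = (?p + v) - \<tau> (?p + v)"
    unfolding x(2) by (simp add: mat_app_smul fun_eq_iff)
  also have "\<dots> = smul 2 v"
    using lc_in_Lplus[of "\<lambda>j. bil v (e_dual j)"] v by (simp add: mem_Lplus mem_Lminus mat_app_add smul_two)
  finally have "x - \<tau> x = v"
    by (rule smul_cancel[rotated]) simp
  then show ?thesis
    using x(1) by blast
qed

lemma bil_double_self: "bil (smul 2 x) (smul 2 x) = 4 * bil x x"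
  by (simp add: bil_smul_left bil_smul_right)

lemma minus_tau_plus_sigma_double:
  assumes "x \<in> LK3" and "4 dvd bil (x + \<tau> x) h"
  shows "\<exists>z\<in>LK3. smul 2 z = (x - \<tau> x) + \<sigma> (x - \<tau> x)"
proof -
  obtain c where "bil (x + \<tau> x) h = 4 * c"
    using assms(2) by blast
  then have "(x + \<tau> x) + \<sigma> (x + \<tau> x) = smul (2 * c) h"
    using Lplus_plus_sigma(2)[OF plus_tau_in_Lplus[OF assms(1)]] by simp
  then have "x i + \<tau> x i + (\<sigma> x i + \<sigma> (\<tau> x) i) = 2 * c * h i" for i
    by (simp add: fun_eq_iff mat_app_add)
  then have "smul 2 (x + \<sigma> x - smul c h) = (x - \<tau> x) + \<sigma> (x - \<tau> x)"
    by (simp add: fun_eq_iff mat_app_diff algebra_simps)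
  then show ?thesis
    using assms(1) h_fixed(1) by blast
qed

lemma not_4_dvd_bil_e_h:
  assumes "k < 8"
  shows "\<not> 4 dvd bil (e k) h"
proof
  assume four: "4 dvd bil (e k) h"
  obtain y where y: "y \<in> LK3" "e k = y + \<tau> y"
    using e_in_Lplus[OF assms] Lplus_eq_plus_tau_image by auto
  define v where "v = y - \<tau> y"
  have v: "v \<in> Lminus S"
    unfolding v_def using minus_tau_in_Lminus[OF y(1)] .
  obtain z where "z \<in> LK3" "smul 2 z = v + \<sigma> v"
    using minus_tau_plus_sigma_double[OF y(1)] four y(2) unfolding v_def by auto
  then have "4 * bil z z = 2 * bil v v"
    using bil_double_self[of z] bil_add_self[of v "\<sigma> v"] isometry[of v v] v
    by (simp add: Lminus_sigma_orthogonal mem_Lminus)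
  moreover have "smul 2 y = e k + v"
    unfolding v_def y(2) by (simp add: smul_two)
  then have "4 * bil y y = e_sq k + bil v v"
    using bil_double_self[of y] bil_add_self[of "e k" v] e_gram[OF assms assms]
      Lplus_Lminus_orthogonal[OF e_in_Lplus[OF assms] v] by simp
  moreover have "even (bil z z)"
    by (rule bil_self_even)
  ultimately show False
    using e_sq_cases[of k] by auto presburger+
qed

lemma Lplus_characteristic_h:
  assumes "u \<in> Lplus S"
  shows "4 dvd (bil u u - bil u h)"
proof -
  obtain c where c: "u = lc e c"
    using Lplus_imp_lc assms by blast
  have "bil u u - bil u h = (\<Sum>k<8. c k * c k * e_sq k - c k * bil (e k) h)"
    using bil_lc_lc[of c c] bil_lc_left[of e c h] by (simp add: c sum_subtractf)
  also have "4 dvd \<dots>"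
    using Lplus_plus_sigma(1)[OF e_in_Lplus] not_4_dvd_bil_e_h
    by (intro dvd_sum four_dvd_square_e_sq) auto
  finally show ?thesis .
qed

lemma h_not_double: "\<not> (\<exists>w\<in>LK3. h = smul 2 w)"
proof
  assume "\<exists>w\<in>LK3. h = smul 2 w"
  then obtain w where w: "w \<in> LK3" "h = smul 2 w"
    by blast
  have "smul 2 (\<sigma> w) = \<sigma> h"
    using w(2) by (simp add: mat_app_smul)
  also have "\<dots> = smul 2 w"
    using h_fixed(2) w(2) by (rule trans)
  finally have "\<sigma> w = w"
    by (rule smul_cancel[rotated]) simp
  then obtain c where "w = smul c h"
    using fixed_imp_multiple_h[OF w(1)] by blast
  with w(2) have "h = smul (2 * c) h"
    by (simp only: smul_smul)
  then have "bil h h = 2 * c * bil h h"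
    by (metis bil_smul_left)
  then show False
    using h_square by (simp; presburger)
qed

end

section \<open>The action of 1 + \<sigma> modulo 2\<close>

lemma of_int_bit: "(of_int k :: bit) = (if even k then 0 else 1)"
proof -
  have "(of_int k :: bit) = of_int (2 * (k div 2)) + of_int (k mod 2)"
    by (metis of_int_add mult_div_mod_eq)
  also have "(of_int (2 * (k div 2)) :: bit) = 0"
    by simp
  finally show ?thesis
    by (auto simp: odd_iff_mod_2_eq_one even_iff_mod_2_eq_zero)
qed

definition mod2 :: "(nat \<Rightarrow> int) \<Rightarrow> nat \<Rightarrow> bit" where
  "mod2 x = (\<lambda>i. if i < 22 then of_int (x i) else 0)"

definition mod2_lift :: "(nat \<Rightarrow> bit) \<Rightarrow> nat \<Rightarrow> int" where
  "mod2_lift v = (\<lambda>i. if i < 22 \<and> v i = 1 then 1 else 0)"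

lemma mod2_add: "mod2 (x + y) = mod2 x + mod2 y"
  unfolding mod2_def by (auto simp: fun_eq_iff)

lemma mod2_diff: "mod2 (x - y) = mod2 x - mod2 y"
  unfolding mod2_def by (auto simp: fun_eq_iff)

lemma mod2_zero [simp]: "mod2 0 = 0"
  unfolding mod2_def by (auto simp: fun_eq_iff)

lemma mod2_eq_0_iff: "mod2 x = 0 \<longleftrightarrow> (\<forall>i<22. even (x i))"
  unfolding mod2_def by (auto simp: fun_eq_iff of_int_bit split: if_splits)

lemma mod2_double [simp]: "mod2 (smul 2 w) = 0"
  unfolding mod2_eq_0_iff by simp

lemma mod2_eq_iff:
  assumes "x \<in> LK3" and "y \<in> LK3"
  shows "mod2 x = mod2 y \<longleftrightarrow> (\<exists>w\<in>LK3. x - y = smul 2 w)"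
proof
  assume "mod2 x = mod2 y"
  then have "mod2 (x - y) = 0"
    by (simp add: mod2_diff)
  then have "\<forall>i<22. even ((x - y) i)"
    by (simp only: mod2_eq_0_iff)
  then show "\<exists>w\<in>LK3. x - y = smul 2 w"
    by (intro LK3_even_imp_double[OF LK3_diff[OF assms]]) simp
next
  assume "\<exists>w\<in>LK3. x - y = smul 2 w"
  then have "mod2 x - mod2 y = 0"
    by (auto simp: mod2_diff[symmetric])
  then show "mod2 x = mod2 y"
    by simp
qed

lemma mod2_lift_LK3: "mod2_lift v \<in> LK3"
  unfolding mod2_lift_def LK3_def by auto

lemma mod2_mod2_lift: "v \<in> mod2 ` LK3 \<Longrightarrow> mod2 (mod2_lift v) = v"
  unfolding mod2_def mod2_lift_def by (auto simp: fun_eq_iff split: if_splits)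

lemma mod2_smul: "mod2 (smul c x) = (if even c then 0 else mod2 x)"
  unfolding mod2_def by (auto simp: fun_eq_iff of_int_bit)

lemma card_mod2_LK3: "finite (mod2 ` LK3)" "card (mod2 ` LK3) = 2 ^ 22"
proof -
  define F where "F J = mod2 (\<lambda>i. of_bool (i \<in> J))" for J
  have F: "F J i = 1 \<longleftrightarrow> i \<in> J" if "J \<subseteq> {..<22}" for J i
    using that unfolding F_def mod2_def by auto
  have "mod2 ` LK3 = F ` Pow {..<22}"
  proof (intro equalityI subsetI)
    fix v
    assume "v \<in> mod2 ` LK3"
    then obtain x where "v = mod2 x"
      by blast
    then have "v = F {i. i < 22 \<and> odd (x i)}"
      unfolding F_def mod2_def by (auto simp: fun_eq_iff of_int_bit)
    then show "v \<in> F ` Pow {..<22}"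
      by blast
  next
    fix v
    assume "v \<in> F ` Pow {..<22}"
    then obtain J where "J \<subseteq> {..<22}" "v = F J"
      by blast
    moreover have "(\<lambda>i. of_bool (i \<in> J)) \<in> LK3" if "J \<subseteq> {..<22}"
      using that unfolding LK3_def by auto
    ultimately show "v \<in> mod2 ` LK3"
      unfolding F_def by blast
  qed
  moreover have "inj_on F (Pow {..<22})"
  proof (rule inj_onI)
    fix J J'
    assume J: "J \<in> Pow {..<22}" "J' \<in> Pow {..<22}" and "F J = F J'"
    have "J = {i. F J i = 1}" "J' = {i. F J' i = 1}"
      using F J by auto
    with \<open>F J = F J'\<close> show "J = J'"
      by simp
  qed
  ultimately show "finite (mod2 ` LK3)" "card (mod2 ` LK3) = 2 ^ 22"
    by (simp_all add: card_image card_Pow)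
qed

context quartic_K3
begin

text \<open>The endomorphism of LK3 / 2 LK3 induced by 1 + \<sigma>; by plus_sigma_mod2_mod2 the choice
  of lift does not matter.\<close>

definition plus_sigma_mod2 :: "(nat \<Rightarrow> bit) \<Rightarrow> nat \<Rightarrow> bit" where
  "plus_sigma_mod2 v = mod2 (mod2_lift v + \<sigma> (mod2_lift v))"

lemma plus_sigma_mod2_mod2:
  assumes "x \<in> LK3"
  shows "plus_sigma_mod2 (mod2 x) = mod2 (x + \<sigma> x)"
proof -
  obtain w where w: "w \<in> LK3" "mod2_lift (mod2 x) - x = smul 2 w"
    using mod2_eq_iff[OF mod2_lift_LK3 assms] mod2_mod2_lift assms by blast
  then have "(mod2_lift (mod2 x) + \<sigma> (mod2_lift (mod2 x))) - (x + \<sigma> x) = smul 2 (w + \<sigma> w)"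
    by (simp add: eq_diff_eq mat_app_add mat_app_smul smul_add algebra_simps)
  then show ?thesis
    unfolding plus_sigma_mod2_def using mod2_eq_iff w(1) assms mod2_lift_LK3 by blast
qed

lemma plus_sigma_mod2_diff:
  assumes "v \<in> mod2 ` LK3" and "v' \<in> mod2 ` LK3"
  shows "plus_sigma_mod2 (v - v') = plus_sigma_mod2 v - plus_sigma_mod2 v'"
proof -
  obtain x x' where "x \<in> LK3" "x' \<in> LK3" "v = mod2 x" "v' = mod2 x'"
    using assms by blast
  then show ?thesis
    by (simp add: mod2_diff[symmetric] plus_sigma_mod2_mod2 mat_app_diff algebra_simps LK3_diff)
qed

lemma plus_sigma_mod2_image_image:
  "plus_sigma_mod2 ` plus_sigma_mod2 ` mod2 ` LK3 = mod2 ` Lplus S"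
proof -
  have "plus_sigma_mod2 (plus_sigma_mod2 (mod2 x)) = mod2 (x + \<tau> x)" if "x \<in> LK3" for x
  proof -
    have "plus_sigma_mod2 (plus_sigma_mod2 (mod2 x)) = mod2 ((x + \<sigma> x) + \<sigma> (x + \<sigma> x))"
      using plus_sigma_mod2_mod2[OF that] plus_sigma_mod2_mod2[OF LK3_add[OF that mat_app_LK3]]
      by simp
    also have "(x + \<sigma> x) + \<sigma> (x + \<sigma> x) = (x + \<tau> x) + smul 2 (\<sigma> x)"
      by (simp add: mat_app_add smul_two algebra_simps)
    finally show ?thesis
      by (simp only: mod2_add mod2_double add_0_right)
  qed
  then have "plus_sigma_mod2 ` plus_sigma_mod2 ` mod2 ` LK3 = mod2 ` (\<lambda>x. x + \<tau> x) ` LK3"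
    by (simp add: image_image cong: image_cong)
  then show ?thesis
    by (simp add: Lplus_eq_plus_tau_image)
qed

lemma card_mod2_Lplus: "card (mod2 ` Lplus S) = 2 ^ 8"
proof -
  define F where "F J = mod2 (lc e (\<lambda>k. of_bool (k \<in> J)))" for J
  have "mod2 ` Lplus S = F ` Pow {..<8}"
  proof (intro equalityI subsetI)
    fix v
    assume "v \<in> mod2 ` Lplus S"
    then obtain c where v: "v = mod2 (lc e c)"
      using Lplus_eq_range_lc by auto
    define J where "J = {k. k < 8 \<and> odd (c k)}"
    have "lc e c - lc e (\<lambda>k. of_bool (k \<in> J)) = smul 2 (lc e (\<lambda>k. (c k - of_bool (k \<in> J)) div 2))"
      unfolding lc_diff lc_smul unfolding lc_def by (intro sum.cong) (auto simp: J_def)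
    then have "v = F J"
      unfolding v F_def by (metis mod2_double mod2_diff right_minus_eq)
    then show "v \<in> F ` Pow {..<8}"
      unfolding J_def by blast
  qed (use lc_in_Lplus in \<open>auto simp: F_def\<close>)
  moreover have "inj_on F (Pow {..<8})"
  proof (rule inj_onI)
    fix J J'
    assume J: "J \<in> Pow {..<8}" "J' \<in> Pow {..<8}" and "F J = F J'"
    then obtain w where "w \<in> LK3"
      "lc e (\<lambda>k. of_bool (k \<in> J) - of_bool (k \<in> J')) = smul 2 w"
      unfolding F_def lc_diff[symmetric] using mod2_eq_iff lc_in_Lplus mem_Lplus by metis
    then have ev: "even (of_bool (k \<in> J) - of_bool (k \<in> J') :: int)" if "k < 8" for k
      using lc_double_imp_even that by blast
    have "k \<in> J \<longleftrightarrow> k \<in> J'" if "k < 8" for k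
      using ev[OF that] by (cases "k \<in> J"; cases "k \<in> J'") auto
    then show "J = J'"
      using J by blast
  qed
  ultimately show ?thesis
    by (simp add: card_image card_Pow)
qed

lemma mod2_h_nonzero: "mod2 h \<noteq> 0"
  using mod2_eq_iff[OF h_fixed(1) LK3_zero] h_not_double by simp

lemma plus_sigma_mod2_image_Lplus: "plus_sigma_mod2 ` mod2 ` Lplus S = {0, mod2 h}"
proof (intro equalityI subsetI)
  fix v
  assume "v \<in> plus_sigma_mod2 ` mod2 ` Lplus S"
  then obtain u where u: "u \<in> Lplus S" "v = plus_sigma_mod2 (mod2 u)"
    by blast
  then have "v = mod2 (smul (bil u h div 2) h)"
    using Lplus_plus_sigma(2)[OF u(1)] by (simp add: plus_sigma_mod2_mod2 mem_Lplus)
  then show "v \<in> {0, mod2 h}"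
    by (simp add: mod2_smul)
next
  fix v
  assume v: "v \<in> {0, mod2 h}"
  have "plus_sigma_mod2 (mod2 0) = 0"
    using plus_sigma_mod2_mod2[OF LK3_zero] by simp
  then have "0 \<in> plus_sigma_mod2 ` mod2 ` Lplus S"
    using zero_in_Lplus by (metis imageI)
  have e0: "e 0 \<in> Lplus S"
    by (rule e_in_Lplus) simp
  have "odd (bil (e 0) h div 2)"
    using Lplus_plus_sigma(1)[OF e0] not_4_dvd_bil_e_h[of 0] by simp presburger
  then have "plus_sigma_mod2 (mod2 (e 0)) = mod2 h"
    using Lplus_plus_sigma(2)[OF e0] e0 by (simp add: plus_sigma_mod2_mod2 mem_Lplus mod2_smul)
  then have "mod2 h \<in> plus_sigma_mod2 ` mod2 ` Lplus S"
    using e0 by (metis imageI)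
  with \<open>0 \<in> plus_sigma_mod2 ` mod2 ` Lplus S\<close> show "v \<in> plus_sigma_mod2 ` mod2 ` Lplus S"
    using v by blast
qed

lemma plus_sigma_mod2_kernel:
  assumes "x \<in> LK3" and "plus_sigma_mod2 (mod2 x) = 0"
  shows "mod2 x \<in> mod2 ` Lplus S"
proof -
  let ?V = "mod2 ` LK3" and ?N = plus_sigma_mod2
  have "add_subgroup ?V"
    using add_subgroup_image[of LK3 mod2] mod2_diff unfolding add_subgroup_def
    by (metis LK3_diff LK3_zero)
  moreover have "?N ` ?V \<subseteq> ?V"
    by (auto simp: plus_sigma_mod2_mod2 intro!: imageI LK3_add)
  moreover have "card ?V * card (?N ` ?N ` ?N ` ?V) ^ 2 = card (?N ` ?N ` ?V) ^ 3"
    using mod2_h_nonzero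
    by (simp add: plus_sigma_mod2_image_image plus_sigma_mod2_image_Lplus card_mod2_LK3
        card_mod2_Lplus power2_eq_square)
  ultimately have "{v \<in> ?V. ?N v = 0} \<subseteq> ?N ` ?N ` ?V"
    using kernel_subset_image_image[OF card_mod2_LK3(1) _ _ plus_sigma_mod2_diff] by blast
  then show ?thesis
    using assms unfolding plus_sigma_mod2_image_image by blast
qed

lemma bil_plus_sigma_Lminus_even:
  assumes r: "r \<in> Lminus S" and y: "y \<in> Lminus S"
  shows "even (bil (r + \<sigma> r) y)"
proof -
  have rL: "r \<in> LK3" "\<tau> r = - r"
    using r by (simp_all add: mem_Lminus)
  have "plus_sigma_mod2 (mod2 (r + \<sigma> r)) = mod2 ((r + \<sigma> r) + \<sigma> (r + \<sigma> r))"
    using rL by (intro plus_sigma_mod2_mod2) auto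
  also have "(r + \<sigma> r) + \<sigma> (r + \<sigma> r) = smul 2 (\<sigma> r)"
    using rL by (simp add: mat_app_add smul_two)
  finally have "plus_sigma_mod2 (mod2 (r + \<sigma> r)) = 0"
    by (simp only: mod2_double)
  then obtain u where u: "u \<in> Lplus S" "mod2 (r + \<sigma> r) = mod2 u"
    using plus_sigma_mod2_kernel rL by blast
  then obtain w where "w \<in> LK3" "(r + \<sigma> r) - u = smul 2 w"
    using mod2_eq_iff rL by (metis LK3_add mat_app_LK3 mem_Lplus)
  then have "bil (r + \<sigma> r) y = bil u y + 2 * bil w y"
    by (metis bil_add_left bil_smul_left diff_add_cancel add.commute)
  then show ?thesis
    using Lplus_Lminus_orthogonal[OF u(1) y] by simp
qed

end

section \<open>The group M_r\<close>

lemma carrier_integer_mod_group_2: "carrier (integer_mod_group 2) = {0, 1}"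
  by (auto simp: carrier_integer_mod_group)

lemma lat_group_simps [simp]:
  "carrier (lat_group A) = A" "mult (lat_group A) = (+)" "one (lat_group A) = 0"
  unfolding lat_group_def by simp_all

lemma group_lat_group:
  assumes "0 \<in> A" and "\<And>x y. x \<in> A \<Longrightarrow> y \<in> A \<Longrightarrow> x + y \<in> A" and "\<And>x. x \<in> A \<Longrightarrow> - x \<in> A"
  shows "group (lat_group A)"
proof (rule groupI)
  show "\<exists>y\<in>carrier (lat_group A). y \<otimes>\<^bsub>lat_group A\<^esub> x = \<one>\<^bsub>lat_group A\<^esub>"
    if "x \<in> carrier (lat_group A)" for x
    using assms(3) that by (intro bexI[of _ "- x"]) auto
qed (use assms in \<open>auto simp: add.assoc\<close>)

locale quartic_K3_vector = quartic_K3 +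
  fixes r :: "nat \<Rightarrow> int" and n :: int
  assumes r_primitive: "primitive_vec (Lminus S) r"
    and r_square: "bil r r = -2 * n"
    and n_pos: "n \<ge> 1"
    and Lam_primitive: "primitive_sub (Lminus S) (Lam S r)"
begin

lemma r_in_Lminus: "r \<in> Lminus S"
  using r_primitive unfolding primitive_vec_def by simp

lemma r_LK3: "r \<in> LK3" and tau_r: "\<tau> r = - r"
  using r_in_Lminus by (simp_all add: mem_Lminus)

lemma sigma_r_in_Lminus: "\<sigma> r \<in> Lminus S"
  using Lminus_sigma[OF r_in_Lminus] .

lemma tau_sigma_r: "\<tau> (\<sigma> r) = - \<sigma> r"
  using sigma_r_in_Lminus by (simp add: mem_Lminus)

lemma bil_r_sigma_r: "bil r (\<sigma> r) = 0" "bil (\<sigma> r) r = 0"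
  using Lminus_sigma_orthogonal[OF r_in_Lminus] bil_sym by metis+

lemma bil_sigma_r_sigma_r: "bil (\<sigma> r) (\<sigma> r) = -2 * n"
  using isometry[OF r_LK3 r_LK3] r_square by simp

lemma Lam_saturated: "x \<in> Lminus S \<Longrightarrow> m \<noteq> 0 \<Longrightarrow> smul m x \<in> Lam S r \<Longrightarrow> x \<in> Lam S r"
  using Lam_primitive unfolding primitive_sub_def by blast

lemma mem_Lam: "x \<in> Lam S r \<longleftrightarrow> (\<exists>a b. x = smul a r + smul b (\<sigma> r))"
  unfolding Lam_def by auto

lemma Lam_subset_Lminus: "x \<in> Lam S r \<Longrightarrow> x \<in> Lminus S"
  unfolding mem_Lam using r_in_Lminus sigma_r_in_Lminus by (auto intro: Lminus_add Lminus_smul)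

lemma bil_Lam_r: "bil (smul a r + smul b (\<sigma> r)) r = -2 * n * a"
  and bil_Lam_sigma_r: "bil (smul a r + smul b (\<sigma> r)) (\<sigma> r) = -2 * n * b"
  by (simp_all add: bil_add_left bil_smul_left r_square bil_r_sigma_r bil_sigma_r_sigma_r)

lemma mem_Lam_perp: "k \<in> Lam_perp S r \<longleftrightarrow> k \<in> Lminus S \<and> bil r k = 0 \<and> bil (\<sigma> r) k = 0"
proof -
  have "r \<in> Lam S r" "\<sigma> r \<in> Lam S r"
    unfolding mem_Lam by (metis add_0 smul_one smul_zero add.right_neutral)+
  moreover have "bil x k = 0" if "x \<in> Lam S r" "bil r k = 0" "bil (\<sigma> r) k = 0" for x
    using that unfolding mem_Lam by (auto simp: bil_add_left bil_smul_left)
  ultimately show ?thesis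
    unfolding Lam_perp_def by blast
qed

lemma bil_minus_tau_Lminus: "x \<in> LK3 \<Longrightarrow> k \<in> Lminus S \<Longrightarrow> bil (x - \<tau> x) k = 2 * bil x k"
  using bil_tau_left[of x k] by (simp add: mem_Lminus bil_diff_left bil_minus_right)

text \<open>2n times the orthogonal projection of L_- onto the complement of Lam S r, as r and
  \<sigma> r are orthogonal of square -2n.\<close>

definition perp_proj :: "(nat \<Rightarrow> int) \<Rightarrow> nat \<Rightarrow> int" where
  "perp_proj z = smul (2 * n) z + smul (bil z r) r + smul (bil z (\<sigma> r)) (\<sigma> r)"

lemma perp_proj_in_Lam_perp: "z \<in> Lminus S \<Longrightarrow> perp_proj z \<in> Lam_perp S r"
  unfolding mem_Lam_perp perp_proj_def using r_in_Lminus sigma_r_in_Lminus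
  by (auto intro!: Lminus_add Lminus_smul
      simp: bil_add_right bil_smul_right r_square bil_r_sigma_r bil_sigma_r_sigma_r bil_sym[of _ z])

lemma Lam_perp_perp:
  assumes z: "z \<in> Lminus S" and perp: "\<And>k. k \<in> Lam_perp S r \<Longrightarrow> bil z k = 0"
  shows "z \<in> Lam S r"
proof -
  let ?z' = "perp_proj z"
  have z': "?z' \<in> Lminus S" "bil r ?z' = 0" "bil (\<sigma> r) ?z' = 0"
    using perp_proj_in_Lam_perp[OF z] unfolding mem_Lam_perp by blast+
  have z'_perp: "bil ?z' k = 0" if "k \<in> Lam_perp S r" for k
    using perp[OF that] that unfolding mem_Lam_perp perp_proj_def
    by (simp add: bil_add_left bil_smul_left)
  have "?z' = 0"
  proof (rule Lminus_nondegenerate[OF z'(1)])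
    fix y
    assume "y \<in> Lminus S"
    then have "bil ?z' (perp_proj y) = 0"
      by (intro z'_perp perp_proj_in_Lam_perp)
    moreover have "bil ?z' (perp_proj y) = 2 * n * bil ?z' y"
      using z'(2,3) bil_sym[of r] bil_sym[of "\<sigma> r"]
      by (simp add: perp_proj_def[of y] bil_add_right bil_smul_right)
    ultimately show "bil ?z' y = 0"
      using n_pos by simp
  qed
  have "smul (2 * n) z = smul (- bil z r) r + smul (- bil z (\<sigma> r)) (\<sigma> r)"
  proof
    fix i
    show "smul (2 * n) z i = (smul (- bil z r) r + smul (- bil z (\<sigma> r)) (\<sigma> r)) i"
      using fun_cong[OF \<open>?z' = 0\<close>, of i] by (simp add: perp_proj_def; linarith)
  qed
  then have "smul (2 * n) z \<in> Lam S r"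
    unfolding mem_Lam by blast
  moreover have "2 * n \<noteq> 0"
    using n_pos by simp
  ultimately show ?thesis
    using Lam_saturated[OF z] by blast
qed

lemma mem_Pr: "x \<in> Pr S r \<longleftrightarrow> x \<in> LK3 \<and> x - \<tau> x \<in> Lam S r"
proof
  assume x: "x \<in> Pr S r"
  then have "x \<in> LK3"
    unfolding Pr_def by simp
  moreover have "bil (x - \<tau> x) k = 0" if "k \<in> Lam_perp S r" for k
    using x that \<open>x \<in> LK3\<close> unfolding Pr_def by (simp add: bil_minus_tau_Lminus mem_Lam_perp)
  then have "x - \<tau> x \<in> Lam S r"
    using Lam_perp_perp minus_tau_in_Lminus[OF \<open>x \<in> LK3\<close>] by blast
  ultimately show "x \<in> LK3 \<and> x - \<tau> x \<in> Lam S r" ..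
next
  assume x: "x \<in> LK3 \<and> x - \<tau> x \<in> Lam S r"
  have "2 * bil x k = 0" if "k \<in> Lam_perp S r" for k
    using x that bil_minus_tau_Lminus[of x k] unfolding Lam_perp_def by auto
  then show "x \<in> Pr S r"
    unfolding Pr_def using x by simp
qed

lemma Pr_add: "x \<in> Pr S r \<Longrightarrow> y \<in> Pr S r \<Longrightarrow> x + y \<in> Pr S r"
  unfolding Pr_def by (auto simp: bil_add_left)

lemma Pr_uminus: "x \<in> Pr S r \<Longrightarrow> - x \<in> Pr S r"
  unfolding Pr_def by (auto simp: bil_minus_left)

lemma zero_in_Pr: "0 \<in> Pr S r"
  unfolding Pr_def by simp

text \<open>The coefficients of x - \<tau> x in the basis r, \<sigma> r of Lam S r.\<close>

definition coord_r :: "(nat \<Rightarrow> int) \<Rightarrow> int" where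
  "coord_r x = - bil (x - \<tau> x) r div (2 * n)"

definition coord_sigma_r :: "(nat \<Rightarrow> int) \<Rightarrow> int" where
  "coord_sigma_r x = - bil (x - \<tau> x) (\<sigma> r) div (2 * n)"

lemma coords_eq:
  assumes "x - \<tau> x = smul a r + smul b (\<sigma> r)"
  shows "coord_r x = a" and "coord_sigma_r x = b"
  using n_pos by (simp_all add: coord_r_def coord_sigma_r_def assms bil_Lam_r bil_Lam_sigma_r)

lemma Pr_coords: "x \<in> Pr S r \<Longrightarrow> x - \<tau> x = smul (coord_r x) r + smul (coord_sigma_r x) (\<sigma> r)"
  using coords_eq unfolding mem_Pr mem_Lam by metis

lemma mem_Pr_coords:
  assumes "x \<in> LK3" and "x - \<tau> x = smul a r + smul b (\<sigma> r)"
  shows "x \<in> Pr S r" and "coord_r x = a" and "coord_sigma_r x = b"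
  using assms coords_eq unfolding mem_Pr mem_Lam by blast+

lemma coords_add:
  assumes "x \<in> Pr S r" and "y \<in> Pr S r"
  shows "coord_r (x + y) = coord_r x + coord_r y" and "coord_sigma_r (x + y) = coord_sigma_r x + coord_sigma_r y"
proof -
  have "(x + y) - \<tau> (x + y) = smul (coord_r x + coord_r y) r + smul (coord_sigma_r x + coord_sigma_r y) (\<sigma> r)"
    using Pr_coords[OF assms(1)] Pr_coords[OF assms(2)]
    by (simp add: mat_app_add smul_def fun_eq_iff algebra_simps)
  then show "coord_r (x + y) = coord_r x + coord_r y" "coord_sigma_r (x + y) = coord_sigma_r x + coord_sigma_r y"
    by (rule coords_eq)+
qed

lemma mem_Lplus_Lam_sum:
  "x \<in> {u + v | u v. u \<in> Lplus S \<and> v \<in> Lam S r}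
    \<longleftrightarrow> x \<in> Pr S r \<and> even (coord_r x) \<and> even (coord_sigma_r x)"
proof
  assume "x \<in> {u + v | u v. u \<in> Lplus S \<and> v \<in> Lam S r}"
  then obtain u a b where u: "u \<in> Lplus S" and x: "x = u + (smul a r + smul b (\<sigma> r))"
    unfolding mem_Lam by blast
  have "x - \<tau> x = smul (2 * a) r + smul (2 * b) (\<sigma> r)"
    using u tau_r tau_sigma_r by (simp add: x mem_Lplus mat_app_add mat_app_smul fun_eq_iff)
  moreover have "x \<in> LK3"
    using u r_LK3 by (auto simp: x mem_Lplus)
  ultimately show "x \<in> Pr S r \<and> even (coord_r x) \<and> even (coord_sigma_r x)"
    using mem_Pr_coords by simp
next
  assume x: "x \<in> Pr S r \<and> even (coord_r x) \<and> even (coord_sigma_r x)"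
  then obtain a b where ab: "x - \<tau> x = smul (2 * a) r + smul (2 * b) (\<sigma> r)"
    using Pr_coords by (metis evenE)
  define v where "v = smul a r + smul b (\<sigma> r)"
  have "v \<in> Lam S r"
    unfolding v_def mem_Lam by blast
  moreover have "x - v \<in> Lplus S"
    using x ab Lam_subset_Lminus[OF \<open>v \<in> Lam S r\<close>]
    by (auto simp: mem_Lplus mem_Lminus mem_Pr v_def mat_app_diff fun_eq_iff algebra_simps)
  ultimately show "x \<in> {u + v | u v. u \<in> Lplus S \<and> v \<in> Lam S r}"
    by force
qed

lemma M_r_iso:
  assumes H: "group H" and f: "f \<in> hom (lat_group (Pr S r)) H" and onto: "f ` Pr S r = carrier H"
    and kernel: "\<And>x. x \<in> Pr S r \<Longrightarrow> f x = \<one>\<^bsub>H\<^esub> \<longleftrightarrow> even (coord_r x) \<and> even (coord_sigma_r x)"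
  shows "M_r S r \<cong> H"
proof -
  interpret group_hom "lat_group (Pr S r)" H f
    using group_lat_group[OF zero_in_Pr Pr_add Pr_uminus] H f
    by (intro group_hom.intro group_hom_axioms.intro)
  have "kernel (lat_group (Pr S r)) H f = {u + v | u v. u \<in> Lplus S \<and> v \<in> Lam S r}"
    unfolding kernel_def using kernel mem_Lplus_Lam_sum by auto
  then show ?thesis
    using FactGroup_iso onto unfolding M_r_def by simp
qed

lemma exists_bil_r_eq_1: "\<exists>x\<in>LK3. bil x r = 1"
proof (rule primitive_imp_bil_eq_1[OF r_LK3])
  show "r \<noteq> 0"
    using r_primitive unfolding primitive_vec_def by simp
  fix k y
  assume y: "y \<in> LK3" and r: "r = smul k y"
  then have "k \<noteq> 0"
    using \<open>r \<noteq> 0\<close> by auto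
  moreover have "smul k (\<tau> y) = smul k (- y)"
    using tau_r r by (simp add: mat_app_smul fun_eq_iff)
  ultimately have "y \<in> Lminus S"
    using y smul_cancel by (auto simp: mem_Lminus)
  then show "\<bar>k\<bar> = 1"
    using r_primitive r unfolding primitive_vec_def by blast
qed

lemma exists_Lminus_bil_r_eq_2: "\<exists>y\<in>Lminus S. bil r y = 2"
proof -
  obtain x where x: "x \<in> LK3" "bil x r = 1"
    using exists_bil_r_eq_1 by blast
  then have "bil r (x - \<tau> x) = 2"
    using bil_minus_tau_Lminus[OF x(1) r_in_Lminus] by (simp add: bil_sym)
  then show ?thesis
    using minus_tau_in_Lminus[OF x(1)] by blast
qed

lemma pair_ideal_eq_UNIV:
  assumes y: "y \<in> Lminus S" and odd: "odd (bil r y)"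
  shows "pair_ideal S r = UNIV"
proof -
  obtain y2 where y2: "y2 \<in> Lminus S" "bil r y2 = 2"
    using exists_Lminus_bil_r_eq_2 by blast
  obtain q where q: "bil r y = 2 * q + 1"
    using odd by (metis oddE)
  have "t \<in> pair_ideal S r" for t
  proof -
    have "bil r (smul t y - smul (t * q) y2) = t"
      using q y2(2) by (simp add: bil_diff_right bil_smul_right algebra_simps)
    moreover have "smul t y - smul (t * q) y2 \<in> Lminus S"
      using y y2(1) by (intro Lminus_diff Lminus_smul)
    ultimately show ?thesis
      unfolding pair_ideal_def by force
  qed
  then show ?thesis
    by blast
qed

lemma pair_ideal_eq_2Z_imp_even:
  assumes ideal: "pair_ideal S r = {2 * k | k. True}" and y: "y \<in> Lminus S"
  shows "even (bil r y)"
proof -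
  have "bil r y \<in> {2 * k | k. True}"
    unfolding ideal[symmetric] pair_ideal_def using y by blast
  then show ?thesis
    by auto
qed

lemma not_4_dvd_bil_plus_tau_h:
  assumes x: "x \<in> LK3" "x - \<tau> x = r"
  shows "\<not> 4 dvd bil (x + \<tau> x) h"
proof
  assume "4 dvd bil (x + \<tau> x) h"
  then obtain z where z: "z \<in> LK3" "smul 2 z = r + \<sigma> r"
    using minus_tau_plus_sigma_double[OF x(1)] x(2) by auto
  have "smul 2 (\<tau> z) = \<tau> (r + \<sigma> r)"
    unfolding z(2)[symmetric] by (simp add: mat_app_smul)
  also have "\<dots> = - smul 2 z"
    unfolding z(2) using tau_r tau_sigma_r by (simp add: mat_app_add mat_app_diff)
  finally have "smul 2 (\<tau> z) = smul 2 (- z)"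
    by (simp add: fun_eq_iff)
  then have "z \<in> Lminus S"
    using z(1) smul_cancel[of 2] by (simp add: mem_Lminus)
  moreover have "smul 2 z \<in> Lam S r"
    unfolding z(2) mem_Lam by (metis smul_one)
  ultimately have "z \<in> Lam S r"
    using Lam_saturated[of z 2] by simp
  then obtain a b where "z = smul a r + smul b (\<sigma> r)"
    unfolding mem_Lam by blast
  then have "-2 * n * (2 * a) = -2 * n"
    using arg_cong[OF z(2), of "\<lambda>v. bil v r"] bil_Lam_r[of a b]
    by (simp add: bil_smul_left bil_add_left r_square bil_r_sigma_r)
  then show False
    using n_pos by (simp; presburger)
qed

lemma pairing_even_imp_odd_n:
  assumes even: "\<And>y. y \<in> Lminus S \<Longrightarrow> even (bil r y)"
  shows "odd n"
proof -
  obtain x where x: "x \<in> LK3" "x - \<tau> x = r"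
    using Lminus_even_pairing_imp_minus_tau[OF r_in_Lminus even] by blast
  let ?u = "x + \<tau> x"
  have u: "?u \<in> Lplus S"
    by (rule plus_tau_in_Lplus[OF x(1)])
  have "smul 2 x = ?u + r"
    using x(2) by (simp add: smul_two fun_eq_iff algebra_simps)
  then have "4 * bil x x = bil ?u ?u - 2 * n"
    using bil_double_self[of x] bil_add_self[of ?u r] Lplus_Lminus_orthogonal[OF u r_in_Lminus]
    by (simp add: r_square)
  moreover have "4 dvd (bil ?u ?u - bil ?u h)"
    by (rule Lplus_characteristic_h[OF u])
  moreover have "even (bil ?u h)" "\<not> 4 dvd bil ?u h"
    using Lplus_plus_sigma(1)[OF u] not_4_dvd_bil_plus_tau_h[OF x] by simp_all
  moreover have "even (bil x x)"
    by (rule bil_self_even)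
  ultimately show "odd n"
    by presburger
qed

lemma M_r_iso_Z2_Z2:
  assumes even: "\<And>y. y \<in> Lminus S \<Longrightarrow> even (bil r y)"
  shows "M_r S r \<cong> DirProd (integer_mod_group 2) (integer_mod_group 2)"
proof (rule M_r_iso)
  let ?f = "\<lambda>x. (coord_r x mod 2, coord_sigma_r x mod 2)"
  show "?f \<in> hom (lat_group (Pr S r)) (DirProd (integer_mod_group 2) (integer_mod_group 2))"
    by (rule homI) (auto simp: carrier_integer_mod_group coords_add mod_add_eq)
  obtain x where x: "x \<in> LK3" "x - \<tau> x = smul 1 r + smul 0 (\<sigma> r)"
    using Lminus_even_pairing_imp_minus_tau[OF r_in_Lminus even] by auto
  have sx: "\<sigma> x - \<tau> (\<sigma> x) = smul 0 r + smul 1 (\<sigma> r)"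
    using x(2) by (simp add: mat_app_diff[symmetric])
  note P = mem_Pr_coords[OF x] mem_Pr_coords[OF mat_app_LK3 sx]
  have mem: "0 \<in> Pr S r" "x \<in> Pr S r" "\<sigma> x \<in> Pr S r" "x + \<sigma> x \<in> Pr S r"
    using P zero_in_Pr Pr_add by blast+
  note imageI[OF mem(1), of ?f] imageI[OF mem(2), of ?f] imageI[OF mem(3), of ?f]
    imageI[OF mem(4), of ?f]
  moreover have "?f 0 = (0, 0)" "?f x = (1, 0)" "?f (\<sigma> x) = (0, 1)" "?f (x + \<sigma> x) = (1, 1)"
    using P mem_Pr_coords[of 0 0 0] by (simp_all add: coords_add)
  ultimately have "{0, 1} \<times> {0, 1} \<subseteq> ?f ` Pr S r"
    by auto
  moreover have "?f ` Pr S r \<subseteq> {0, 1} \<times> {0, 1}"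
    by (auto simp: carrier_integer_mod_group_2[symmetric] carrier_integer_mod_group)
  ultimately show "?f ` Pr S r = carrier (DirProd (integer_mod_group 2) (integer_mod_group 2))"
    unfolding carrier_DirProd carrier_integer_mod_group_2 by (rule equalityI[rotated])
qed (auto simp: even_iff_mod_2_eq_zero intro: DirProd_group)

lemma coords_congruent:
  assumes x: "x \<in> Pr S r" and y: "y \<in> Lminus S" "bil r y = 1"
  shows "even (coord_r x - coord_sigma_r x)"
proof -
  have "bil (x - \<tau> x) y = 2 * bil x y"
    using x y(1) by (simp add: mem_Pr bil_minus_tau_Lminus)
  then have "even (coord_r x + coord_sigma_r x * bil (\<sigma> r) y)"
    using Pr_coords[OF x] y(2) by (simp add: bil_add_left bil_smul_left)
  moreover have "odd (bil (\<sigma> r) y)"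
    using bil_plus_sigma_Lminus_even[OF r_in_Lminus y(1)] y(2) by (simp add: bil_add_left)
  ultimately show ?thesis
    by simp
qed

lemma M_r_iso_Z2:
  assumes "1 \<in> pair_ideal S r"
  shows "M_r S r \<cong> integer_mod_group 2"
proof (rule M_r_iso)
  let ?f = "\<lambda>x. coord_r x mod 2"
  show "?f \<in> hom (lat_group (Pr S r)) (integer_mod_group 2)"
    by (rule homI) (auto simp: carrier_integer_mod_group coords_add mod_add_eq)
  obtain x where x: "x \<in> LK3" "x - \<tau> x = smul 1 r + smul 1 (\<sigma> r)"
    using Lminus_even_pairing_imp_minus_tau[OF Lminus_add[OF r_in_Lminus sigma_r_in_Lminus]]
      bil_plus_sigma_Lminus_even[OF r_in_Lminus] by auto
  have "0 \<in> Pr S r" "x \<in> Pr S r" "?f 0 = 0" "?f x = 1"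
    using mem_Pr_coords[OF x] mem_Pr_coords[of 0 0 0] by simp_all
  then have "{0, 1} \<subseteq> ?f ` Pr S r"
    using imageI[of 0 "Pr S r" ?f] imageI[of x "Pr S r" ?f] by simp
  moreover have "?f ` Pr S r \<subseteq> {0, 1}"
    by (auto simp: carrier_integer_mod_group_2[symmetric] carrier_integer_mod_group)
  ultimately show "?f ` Pr S r = carrier (integer_mod_group 2)"
    unfolding carrier_integer_mod_group_2 by (rule equalityI[rotated])
  obtain y where y: "y \<in> Lminus S" "1 = bil r y"
    using assms unfolding pair_ideal_def by blast
  show "?f x = \<one>\<^bsub>integer_mod_group 2\<^esub> \<longleftrightarrow> even (coord_r x) \<and> even (coord_sigma_r x)"
    if "x \<in> Pr S r" for x
    using coords_congruent[OF that y(1) y(2)[symmetric]] by (simp; presburger)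
qed simp

end

theorem proposition3p2:
  fixes S :: "nat \<Rightarrow> nat \<Rightarrow> int" and r :: "nat \<Rightarrow> int" and n :: int
  assumes "quartic_K3_sigma S"
    and "primitive_vec (Lminus S) r"
    and "bil r r = -2 * n"
    and "n \<ge> 1"
    and "primitive_sub (Lminus S) (Lam S r)"
  shows "(even n \<longrightarrow> M_r S r \<cong> integer_mod_group 2 \<and> pair_ideal S r = UNIV) \<and>
         (odd n \<longrightarrow>
            (pair_ideal S r = {2 * k | k. True} \<longrightarrow>
               M_r S r \<cong> DirProd (integer_mod_group 2) (integer_mod_group 2)) \<and>
            (pair_ideal S r = UNIV \<longrightarrow> M_r S r \<cong> integer_mod_group 2))"
proof -
  obtain e h where "quartic_K3 S e h"
    using quartic_K3_sigma_imp_quartic_K3[OF assms(1)] by blast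
  then interpret quartic_K3_vector S e h r n
    using assms(2-5) by (intro quartic_K3_vector.intro quartic_K3_vector_axioms.intro)
  show ?thesis
  proof (intro conjI impI)
    assume "even n"
    then obtain y where "y \<in> Lminus S" "odd (bil r y)"
      using pairing_even_imp_odd_n by blast
    then show "pair_ideal S r = UNIV"
      by (rule pair_ideal_eq_UNIV)
    then show "M_r S r \<cong> integer_mod_group 2"
      by (intro M_r_iso_Z2) simp
  next
    assume "pair_ideal S r = {2 * k | k. True}"
    then show "M_r S r \<cong> DirProd (integer_mod_group 2) (integer_mod_group 2)"
      by (intro M_r_iso_Z2_Z2 pair_ideal_eq_2Z_imp_even)
  next
    assume "pair_ideal S r = UNIV"
    then show "M_r S r \<cong> integer_mod_group 2"
      by (intro M_r_iso_Z2) simp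
  qed
qed

end
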